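(* Let $H\neq0$ be a Hermitian matrix of order $n\ge2$. Let $(H^{(k)},k\ge0)$ be generated by the Jacobi-type process $H^{(0)}=H$, $H^{(k+1)}=F_k^*H^{(k)}F_k$, $k\ge0$, where each $F_k=(f^{(k)}_{rs})$ is an elementary plane matrix acting in the $(i(k),j(k))$ plane, $i(k)<j(k)$. Suppose: (A1) the pivot strategy is generalized serial, i.e. $(i(k),j(k))=I_{\mathcal{O}}(k)$ for all $k$, for some $\mathcal{O}\in\mathcal{C}_{sg}^{(n)}$; (A2) there is a sequence of unitary elementary plane matrices $(U_k,k\ge0)$ with $\lim_{k\to\infty}(F_k-U_k)=0$; (A3) $\liminf_{k\to\infty}|f^{(k)}_{i(k)i(k)}|>0$; (A4) the sequence $(H^{(k)},k\ge0)$ is bounded. Then the following are equivalent: (i) $\lim_{k\to\infty}|h^{(k+1)}_{i(k)j(k)}|=0$, where $H^{(k+1)}=(h^{(k+1)}_{rs})$; (ii) $\lim_{k\to\infty}S(H^{(k)})=0$.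
   Context: $S(X)=\|X-\mathrm{diag}(X)\|_F$. An elementary plane matrix is a nonsingular $n\times n$ matrix that differs from $I_n$ only in one $2\times2$ principal submatrix; it acts in the $(i,j)$ plane if that submatrix lies in rows and columns $i,j$. Let $\mathcal{P}_n=\{(r,s):1\le r<s\le n\}$, $N=n(n-1)/2$; an ordering is a sequence listing each element of $\mathcal{P}_n$ exactly once. For an ordering $\mathcal{O}=(i_0,j_0),\dots,(i_{N-1},j_{N-1})$, the cyclic strategy is $I_{\mathcal{O}}(k)=(i_{k\bmod N},j_{k\bmod N})$. Relations on orderings: an admissible transposition swaps two adjacent pairs with disjoint index sets; $\mathcal{O}\sim\mathcal{O}'$ if one is obtained from the other by finitely many admissible transpositions; $\mathcal{O}\stackrel{\mathsf{s}}{\sim}\mathcal{O}'$ if $\mathcal{O}=[\mathcal{O}_1,\mathcal{O}_2]$, $\mathcal{O}'=[\mathcal{O}_2,\mathcal{O}_1]$ (concatenation); $\mathcal{O}\stackrel{\mathsf{w}}{\sim}\mathcal{O}'$ if there is a chain $\mathcal{O}=\mathcal{O}_0,\dots,\mathcal{O}_r=\mathcal{O}'$ of orderings whose adjacent terms are $\sim$ or $\stackrel{\mathsf{s}}{\sim}$; the chain is in canonical form if these relations alternate between $\sim$ and $\stackrel{\mathsf{s}}{\sim}$. $\mathcal{O}\stackrel{\mathsf{p}}{\sim}\mathcal{O}'$ if for some permutation $\mathsf{q}$ of $\{1,\dots,n\}$, $\mathcal{O}'$ arises by replacing each pair $(i_k,j_k)$ by the pair with entries $\mathsf{q}(i_k),\mathsf{q}(j_k)$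 in increasing order. $\mathcal{C}_c^{(n)}$: orderings $(1,2),(\tau_3(1),3),(\tau_3(2),3),\dots,(\tau_n(1),n),\dots,(\tau_n(n-1),n)$, $\tau_j$ a permutation of $\{1,\dots,j-1\}$; $\mathcal{C}_r^{(n)}$: orderings $(n-1,n),(n-2,\tau_{n-2}(n-1)),(n-2,\tau_{n-2}(n)),\dots,(1,\tau_1(2)),\dots,(1,\tau_1(n))$, $\tau_i$ a permutation of $\{i+1,\dots,n\}$; $\overleftarrow{\mathcal{C}}_c^{(n)},\overleftarrow{\mathcal{C}}_r^{(n)}$ the sets of orderings whose reversed sequences lie in $\mathcal{C}_c^{(n)}$, $\mathcal{C}_r^{(n)}$; $\mathcal{C}_{sp}^{(n)}=\mathcal{C}_c^{(n)}\cup\overleftarrow{\mathcal{C}}_c^{(n)}\cup\mathcal{C}_r^{(n)}\cup\overleftarrow{\mathcal{C}}_r^{(n)}$. $\mathcal{C}_{sg}^{(n)}$ (generalized serial orderings) is the set of orderings $\mathcal{O}$ with $\mathcal{O}\stackrel{\mathsf{p}}{\sim}\mathcal{O}'\stackrel{\mathsf{w}}{\sim}\mathcal{O}''$ or $\mathcal{O}\stackrel{\mathsf{w}}{\sim}\mathcal{O}'\stackrel{\mathsf{p}}{\sim}\mathcal{O}''$ for some ordering $\mathcal{O}'$ and some $\mathcal{O}''\in\mathcal{C}_{sp}^{(n)}$, the weak equivalence given in canonical form. *)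

theory Defs
  imports "HOL-Analysis.Analysis" "HOL-Combinatorics.Permutations"
begin

text \<open>Matrices of order n are represented as functions nat => nat => complex;
  only the entries with indices in {1..n} are meaningful (1-based, as in the paper).\<close>

type_synonym cmat = "nat \<Rightarrow> nat \<Rightarrow> complex"

definition idm :: cmat where
  "idm r s = (if r = s then 1 else 0)"

definition mmult :: "nat \<Rightarrow> cmat \<Rightarrow> cmat \<Rightarrow> cmat" where
  "mmult n A B = (\<lambda>r s. \<Sum>t=1..n. A r t * B t s)"

definition adj :: "cmat \<Rightarrow> cmat" where
  "adj A = (\<lambda>r s. cnj (A s r))"

definition hermitian_mat :: "nat \<Rightarrow> cmat \<Rightarrow> bool" where
  "hermitian_mat n A \<longleftrightarrow> (\<forall>r\<in>{1..n}. \<forall>s\<in>{1..n}. A r s = cnj (A s r))"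

definition zero_mat :: "nat \<Rightarrow> cmat \<Rightarrow> bool" where
  "zero_mat n A \<longleftrightarrow> (\<forall>r\<in>{1..n}. \<forall>s\<in>{1..n}. A r s = 0)"

definition unitary_mat :: "nat \<Rightarrow> cmat \<Rightarrow> bool" where
  "unitary_mat n U \<longleftrightarrow> (\<forall>r\<in>{1..n}. \<forall>s\<in>{1..n}. mmult n (adj U) U r s = idm r s)"

definition nonsingular_mat :: "nat \<Rightarrow> cmat \<Rightarrow> bool" where
  "nonsingular_mat n A \<longleftrightarrow> (\<exists>B. \<forall>r\<in>{1..n}. \<forall>s\<in>{1..n}. mmult n A B r s = idm r s)"

definition off_norm :: "nat \<Rightarrow> cmat \<Rightarrow> real" where
  "off_norm n X = sqrt (\<Sum>r=1..n. \<Sum>s=1..n. if r = s then 0 else (cmod (X r s))\<^sup>2)"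

definition elem_plane :: "nat \<Rightarrow> nat \<Rightarrow> nat \<Rightarrow> cmat \<Rightarrow> bool" where
  "elem_plane n i j F \<longleftrightarrow> 1 \<le> i \<and> i < j \<and> j \<le> n \<and> nonsingular_mat n F \<and>
     (\<forall>r\<in>{1..n}. \<forall>s\<in>{1..n}. (r \<notin> {i,j} \<or> s \<notin> {i,j}) \<longrightarrow> F r s = idm r s)"

definition elem_plane_any :: "nat \<Rightarrow> cmat \<Rightarrow> bool" where
  "elem_plane_any n F \<longleftrightarrow> (\<exists>i j. elem_plane n i j F)"

definition pairs :: "nat \<Rightarrow> (nat \<times> nat) set" where
  "pairs n = {(r,s). 1 \<le> r \<and> r < s \<and> s \<le> n}"

definition is_ordering :: "nat \<Rightarrow> (nat \<times> nat) list \<Rightarrow> bool" where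
  "is_ordering n os \<longleftrightarrow> distinct os \<and> set os = pairs n"

definition cyclic_strategy :: "(nat \<times> nat) list \<Rightarrow> nat \<Rightarrow> nat \<times> nat" where
  "cyclic_strategy os k = os ! (k mod length os)"

definition adm_transp :: "(nat \<times> nat) list \<Rightarrow> (nat \<times> nat) list \<Rightarrow> bool" where
  "adm_transp os osA \<longleftrightarrow> (\<exists>t. Suc t < length os \<and>
     {fst (os ! t), snd (os ! t)} \<inter> {fst (os ! Suc t), snd (os ! Suc t)} = {} \<and>
     osA = os[t := os ! Suc t, Suc t := os ! t])"

definition equiv_ord :: "(nat \<times> nat) list \<Rightarrow> (nat \<times> nat) list \<Rightarrow> bool" where
  "equiv_ord = adm_transp\<^sup>*\<^sup>*"

definition shift_equiv :: "(nat \<times> nat) list \<Rightarrow> (nat \<times> nat) list \<Rightarrow> bool" where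
  "shift_equiv os osA \<longleftrightarrow> (\<exists>os1 os2. os = os1 @ os2 \<and> osA = os2 @ os1)"

definition weak_equiv :: "(nat \<times> nat) list \<Rightarrow> (nat \<times> nat) list \<Rightarrow> bool" where
  "weak_equiv = (\<lambda>os osA. equiv_ord os osA \<or> shift_equiv os osA)\<^sup>*\<^sup>*"

definition perm_equiv :: "nat \<Rightarrow> (nat \<times> nat) list \<Rightarrow> (nat \<times> nat) list \<Rightarrow> bool" where
  "perm_equiv n os osA \<longleftrightarrow> (\<exists>q. q permutes {1..n} \<and>
     osA = map (\<lambda>(i,j). (min (q i) (q j), max (q i) (q j))) os)"

definition col_cyclic :: "nat \<Rightarrow> (nat \<times> nat) list set" where
  "col_cyclic n = {os. \<exists>\<tau>. (\<forall>j. \<tau> j permutes {1..<j}) \<and>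
     os = concat (map (\<lambda>j. map (\<lambda>i. (\<tau> j i, j)) [1..<j]) [2..<Suc n])}"

definition row_cyclic :: "nat \<Rightarrow> (nat \<times> nat) list set" where
  "row_cyclic n = {os. \<exists>\<tau>. (\<forall>i. \<tau> i permutes {Suc i..n}) \<and>
     os = concat (map (\<lambda>i. map (\<lambda>j. (i, \<tau> i j)) [Suc i..<Suc n]) (rev [1..<n]))}"

definition serial_sp :: "nat \<Rightarrow> (nat \<times> nat) list set" where
  "serial_sp n = col_cyclic n \<union> {os. rev os \<in> col_cyclic n} \<union>
                 row_cyclic n \<union> {os. rev os \<in> row_cyclic n}"

definition gen_serial :: "nat \<Rightarrow> (nat \<times> nat) list set" where
  "gen_serial n = {os. is_ordering n os \<and>
     (\<exists>osA osB. is_ordering n osA \<and> osB \<in> serial_sp n \<and>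
        ((perm_equiv n os osA \<and> weak_equiv osA osB) \<or> (weak_equiv os osA \<and> perm_equiv n osA osB)))}"

end

theory Submission
  imports Defs
begin

text \<open>Along a subsequence on which \<open>S(H\<^sub>k)\<^sup>2\<close> tends to its limit superior \<open>A\<close>, windows of
  boundedly many preceding steps converge, by (A2)--(A4) and compactness, to an exact process of
  unitary plane rotations with nonzero diagonal in which every rotation annihilates its pivot.
  Along an exact process \<open>S\<^sup>2\<close> drops by twice the squared pivot; the limit window starts at most at
  \<open>A\<close> and ends at \<open>A\<close>, so all its pivots vanish, and its off-diagonal part is annihilated by full
  sweeps of the ordering.  Generalized serial orderings force this to be zero: for column- and
  row-cyclic orderings by an induction over leading principal blocks, and the property survives
  reversal, admissible transpositions, cyclic shifts and relabelling of indices, provided enough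
  sweeps are taken.\<close>

definition congr_mat :: "nat \<Rightarrow> cmat \<Rightarrow> cmat \<Rightarrow> cmat" where
  "congr_mat n G X = mmult n (mmult n (adj G) X) G"

definition in_plane :: "nat \<Rightarrow> nat \<Rightarrow> nat \<Rightarrow> cmat \<Rightarrow> bool" where
  "in_plane n p q G \<longleftrightarrow> (\<forall>r\<in>{1..n}. \<forall>s\<in>{1..n}. (r \<notin> {p,q} \<or> s \<notin> {p,q}) \<longrightarrow> G r s = idm r s)"

definition plane_support :: "nat \<Rightarrow> nat \<Rightarrow> nat \<Rightarrow> nat set" where
  "plane_support p q r = (if r \<in> {p,q} then {p,q} else {r})"

definition mat_eq :: "nat \<Rightarrow> cmat \<Rightarrow> cmat \<Rightarrow> bool" where
  "mat_eq n X Y \<longleftrightarrow> (\<forall>r\<in>{1..n}. \<forall>s\<in>{1..n}. X r s = Y r s)"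

definition zero_diag :: "nat \<Rightarrow> cmat \<Rightarrow> bool" where
  "zero_diag n X \<longleftrightarrow> (\<forall>r\<in>{1..n}. X r r = 0)"

(* The nonzero diagonal is what the limits inherit from (A3); the column argument below needs it. *)
definition plane_rotation :: "nat \<Rightarrow> nat \<Rightarrow> nat \<Rightarrow> cmat \<Rightarrow> bool" where
  "plane_rotation n p q G \<longleftrightarrow> 1 \<le> p \<and> p < q \<and> q \<le> n \<and>
     unitary_mat n G \<and> unitary_mat n (adj G) \<and> in_plane n p q G \<and> G p p \<noteq> 0 \<and> G q q \<noteq> 0"

lemma mat_eq_trans: "mat_eq n X Y \<Longrightarrow> mat_eq n Y Z \<Longrightarrow> mat_eq n X Z"
  unfolding mat_eq_def by auto

lemma mmult_assoc: "mmult n (mmult n A B) C = mmult n A (mmult n B C)"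
  unfolding mmult_def
  by (intro ext) (simp add: sum_distrib_left sum_distrib_right mult.assoc, rule sum.swap)

lemma adj_mmult: "adj (mmult n A B) = mmult n (adj B) (adj A)"
  unfolding mmult_def adj_def by (auto simp: mult.commute intro!: ext)

lemma adj_adj[simp]: "adj (adj A) = A"
  unfolding adj_def by auto

lemma mmult_cong_right: "mat_eq n B B' \<Longrightarrow> s \<in> {1..n} \<Longrightarrow> mmult n A B r s = mmult n A B' r s"
  unfolding mmult_def mat_eq_def by (auto intro!: sum.cong)

lemma mmult_cong_left: "mat_eq n A A' \<Longrightarrow> r \<in> {1..n} \<Longrightarrow> mmult n A C r s = mmult n A' C r s"
  unfolding mmult_def mat_eq_def by (auto intro!: sum.cong)

lemma congr_mat_cong: "mat_eq n X Y \<Longrightarrow> congr_mat n G X = congr_mat n G Y"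
proof (intro ext)
  fix r s assume e: "mat_eq n X Y"
  show "congr_mat n G X r s = congr_mat n G Y r s"
    unfolding congr_mat_def mmult_def[of n "mmult n (adj G) X"] mmult_def[of n "mmult n (adj G) Y"]
    by (rule sum.cong, simp, subst mmult_cong_right[OF e], auto)
qed

lemma mmult_idm_left: "(\<forall>r\<in>{1..n}. \<forall>t\<in>{1..n}. A r t = idm r t) \<Longrightarrow> r \<in> {1..n} \<Longrightarrow>
    mmult n A B r s = B r s"
proof -
  assume a: "\<forall>r\<in>{1..n}. \<forall>t\<in>{1..n}. A r t = idm r t" and r: "r \<in> {1..n}"
  have "mmult n A B r s = (\<Sum>t\<in>{1..n}. (if r = t then B t s else 0))"
    unfolding mmult_def by (rule sum.cong, simp, use a r in \<open>auto simp: idm_def\<close>)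
  also have "\<dots> = B r s" using r by (simp add: sum.delta)
  finally show ?thesis .
qed

lemma mmult_idm_right: "(\<forall>t\<in>{1..n}. \<forall>s\<in>{1..n}. A t s = idm t s) \<Longrightarrow> s \<in> {1..n} \<Longrightarrow>
    mmult n B A r s = B r s"
proof -
  assume a: "\<forall>t\<in>{1..n}. \<forall>s\<in>{1..n}. A t s = idm t s" and s: "s \<in> {1..n}"
  have "mmult n B A r s = (\<Sum>t\<in>{1..n}. (if t = s then B r t else 0))"
    unfolding mmult_def by (rule sum.cong, simp, use a s in \<open>auto simp: idm_def\<close>)
  also have "\<dots> = B r s" using s by (simp add: sum.delta')
  finally show ?thesis .
qed

lemma congr_mat_congr_mat: "congr_mat n A (congr_mat n B Y) = congr_mat n (mmult n B A) Y"
  unfolding congr_mat_def adj_mmult mmult_assoc ..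

lemma hermitian_congr_mat: "hermitian_mat n X \<Longrightarrow> hermitian_mat n (congr_mat n G X)"
  unfolding hermitian_mat_def
proof (intro ballI)
  fix r s assume h: "\<forall>r\<in>{1..n}. \<forall>s\<in>{1..n}. X r s = cnj (X s r)" and rs: "r \<in> {1..n}" "s \<in> {1..n}"
  have e: "congr_mat n G X a b = (\<Sum>u\<in>{1..n}. \<Sum>t\<in>{1..n}. cnj (G t a) * X t u * G u b)" for a b
    unfolding congr_mat_def mmult_def adj_def by (simp add: sum_distrib_right)
  have "cnj (congr_mat n G X s r) = (\<Sum>u\<in>{1..n}. \<Sum>t\<in>{1..n}. cnj (cnj (G t s) * X t u * G u r))"
    unfolding e by (simp only: cnj_sum)
  also have "\<dots> = (\<Sum>t\<in>{1..n}. \<Sum>u\<in>{1..n}. cnj (cnj (G t s) * X t u * G u r))"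
    by (rule sum.swap)
  also have "\<dots> = (\<Sum>t\<in>{1..n}. \<Sum>u\<in>{1..n}. cnj (G u r) * X u t * G t s)"
  proof (intro sum.cong refl)
    fix t u assume "t \<in> {1..n}" "u \<in> {1..n}"
    then have "X t u = cnj (X u t)" using h by blast
    then show "cnj (cnj (G t s) * X t u * G u r) = cnj (G u r) * X u t * G t s"
      by (simp add: mult_ac)
  qed
  also have "\<dots> = congr_mat n G X r s" unfolding e ..
  finally show "congr_mat n G X r s = cnj (congr_mat n G X s r)" by simp
qed

lemma congr_mat_adj_cancel:
  assumes "unitary_mat n (adj G)"
  shows "mat_eq n (congr_mat n (adj G) (congr_mat n G X)) X"
  unfolding mat_eq_def congr_mat_congr_mat
proof (intro ballI)
  fix r s assume rs: "r \<in> {1..n}" "s \<in> {1..n}"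
  have u: "\<forall>r\<in>{1..n}. \<forall>s\<in>{1..n}. mmult n G (adj G) r s = idm r s"
    using assms unfolding unitary_mat_def by simp
  have "congr_mat n (mmult n G (adj G)) X r s =
      mmult n (mmult n (adj (mmult n G (adj G))) X) (mmult n G (adj G)) r s"
    unfolding congr_mat_def ..
  also have "\<dots> = mmult n (adj (mmult n G (adj G))) X r s"
    by (rule mmult_idm_right[OF u rs(2)])
  also have "\<dots> = X r s"
    apply (rule mmult_idm_left[OF _ rs(1)])
    unfolding adj_mmult adj_adj using u by (auto simp: idm_def)
  finally show "congr_mat n (mmult n G (adj G)) X r s = X r s" .
qed

lemma congr_mat_of_zero: "(\<forall>a\<in>{1..n}. \<forall>b\<in>{1..n}. X a b = 0) \<Longrightarrow> congr_mat n G X r s = 0"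
  unfolding congr_mat_def mmult_def by simp

lemma plane_support_subset: "p \<in> {1..n} \<Longrightarrow> q \<in> {1..n} \<Longrightarrow> r \<in> {1..n} \<Longrightarrow> plane_support p q r \<subseteq> {1..n}"
  unfolding plane_support_def by auto

lemma mmult_in_plane_right:
  assumes G: "in_plane n p q G" and pq: "p \<in> {1..n}" "q \<in> {1..n}" and s: "s \<in> {1..n}"
  shows "mmult n Y G r s = (\<Sum>b\<in>plane_support p q s. Y r b * G b s)"
  unfolding mmult_def
proof (rule sum.mono_neutral_right)
  show "finite {1..n}" by simp
  show "plane_support p q s \<subseteq> {1..n}" using plane_support_subset pq s .
  show "\<forall>i\<in>{1..n} - plane_support p q s. Y r i * G i s = 0"
    using G s unfolding in_plane_def plane_support_def idm_def by (auto split: if_splits)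
qed

lemma mmult_adj_in_plane_left:
  assumes G: "in_plane n p q G" and pq: "p \<in> {1..n}" "q \<in> {1..n}" and r: "r \<in> {1..n}"
  shows "mmult n (adj G) Y r s = (\<Sum>a\<in>plane_support p q r. cnj (G a r) * Y a s)"
  unfolding mmult_def adj_def
proof (rule sum.mono_neutral_right)
  show "finite {1..n}" by simp
  show "plane_support p q r \<subseteq> {1..n}" using plane_support_subset pq r .
  show "\<forall>i\<in>{1..n} - plane_support p q r. cnj (G i r) * Y i s = 0"
    using G r unfolding in_plane_def plane_support_def idm_def by (auto split: if_splits)
qed

lemma congr_mat_in_plane:
  assumes G: "in_plane n p q G" and pq: "p \<in> {1..n}" "q \<in> {1..n}" and rs: "r \<in> {1..n}" "s \<in> {1..n}"
  shows "congr_mat n G X r s =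
      (\<Sum>b\<in>plane_support p q s. (\<Sum>a\<in>plane_support p q r. cnj (G a r) * X a b) * G b s)"
proof -
  have "congr_mat n G X r s = (\<Sum>b\<in>plane_support p q s. mmult n (adj G) X r b * G b s)"
    unfolding congr_mat_def by (rule mmult_in_plane_right[OF G pq rs(2)])
  also have "\<dots> = (\<Sum>b\<in>plane_support p q s. (\<Sum>a\<in>plane_support p q r. cnj (G a r) * X a b) * G b s)"
    by (rule sum.cong[OF refl], subst mmult_adj_in_plane_left[OF G pq rs(1)], auto)
  finally show ?thesis .
qed

lemma in_plane_diag: "in_plane n p q G \<Longrightarrow> r \<in> {1..n} \<Longrightarrow> r \<notin> {p,q} \<Longrightarrow> G r r = 1"
  unfolding in_plane_def idm_def by auto

lemma congr_mat_out_out: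
  assumes G: "in_plane n p q G" and pq: "p \<in> {1..n}" "q \<in> {1..n}" and rs: "r \<in> {1..n}" "s \<in> {1..n}"
    and o: "r \<notin> {p,q}" "s \<notin> {p,q}"
  shows "congr_mat n G X r s = X r s"
  unfolding congr_mat_in_plane[OF G pq rs]
  using o in_plane_diag[OF G rs(1) o(1)] in_plane_diag[OF G rs(2) o(2)]
  by (simp add: plane_support_def)

lemma congr_mat_out_in:
  assumes G: "in_plane n p q G" and pq: "p \<in> {1..n}" "q \<in> {1..n}" "p \<noteq> q"
    and rs: "r \<in> {1..n}" "s \<in> {1..n}"
    and o: "r \<notin> {p,q}" "s \<in> {p,q}"
  shows "congr_mat n G X r s = X r p * G p s + X r q * G q s"
  unfolding congr_mat_in_plane[OF G pq(1,2) rs] using o in_plane_diag[OF G rs(1) o(1)] pq(3)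
  by (simp add: plane_support_def)

lemma congr_mat_in_out:
  assumes G: "in_plane n p q G" and pq: "p \<in> {1..n}" "q \<in> {1..n}" "p \<noteq> q"
    and rs: "r \<in> {1..n}" "s \<in> {1..n}"
    and o: "r \<in> {p,q}" "s \<notin> {p,q}"
  shows "congr_mat n G X r s = cnj (G p r) * X p s + cnj (G q r) * X q s"
  unfolding congr_mat_in_plane[OF G pq(1,2) rs] using o in_plane_diag[OF G rs(2) o(2)] pq(3)
  by (simp add: plane_support_def)

lemma congr_mat_in_in:
  assumes G: "in_plane n p q G" and pq: "p \<in> {1..n}" "q \<in> {1..n}" "p \<noteq> q"
    and rs: "r \<in> {1..n}" "s \<in> {1..n}"
    and o: "r \<in> {p,q}" "s \<in> {p,q}"
  shows "congr_mat n G X r s = (cnj (G p r) * X p p + cnj (G q r) * X q p) * G p s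
                       + (cnj (G p r) * X p q + cnj (G q r) * X q q) * G q s"
  unfolding congr_mat_in_plane[OF G pq(1,2) rs] using o pq(3)
  by (simp add: plane_support_def)

lemma congr_mat_block_zero:
  assumes G: "in_plane n p q G" and pq: "p \<in> {1..n}" "q \<in> {1..n}" "p \<noteq> q"
    and rs: "r \<in> {1..n}" "s \<in> {1..n}"
    and o: "r \<in> {p,q}" "s \<in> {p,q}"
    and z: "X p p = 0" "X q q = 0" "X p q = 0" "X q p = 0"
  shows "congr_mat n G X r s = 0"
  unfolding congr_mat_in_in[OF G pq rs o] z by simp

lemma hermitian_zero_swap: "hermitian_mat n X \<Longrightarrow> p \<in> {1..n} \<Longrightarrow> q \<in> {1..n} \<Longrightarrow> X p q = 0 \<Longrightarrow> X q p = 0"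
  unfolding hermitian_mat_def by (metis complex_cnj_zero)

lemma zero_diag_congr_mat:
  assumes G: "in_plane n p q G" and pq: "p \<in> {1..n}" "q \<in> {1..n}" "p \<noteq> q"
    and h: "hermitian_mat n X" and z: "zero_diag n X" and x: "X p q = 0"
  shows "zero_diag n (congr_mat n G X)"
  unfolding zero_diag_def
proof
  fix r assume r: "r \<in> {1..n}"
  show "congr_mat n G X r r = 0"
  proof (cases "r \<in> {p,q}")
    case True
    have "X p p = 0" "X q q = 0" using z pq by (auto simp: zero_diag_def)
    then show ?thesis
      using congr_mat_block_zero[OF G pq r r True True] x hermitian_zero_swap[OF h pq(1,2) x]
      by blast
  next
    case False
    then show ?thesis using congr_mat_out_out[OF G pq(1,2) r r False False] z r
      by (simp add: zero_diag_def)
  qed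
qed

lemma plane_rotation_in_plane: "plane_rotation n p q G \<Longrightarrow> in_plane n p q G"
  unfolding plane_rotation_def by simp
lemma plane_rotation_range: "plane_rotation n p q G \<Longrightarrow> p \<in> {1..n} \<and> q \<in> {1..n} \<and> p \<noteq> q"
  unfolding plane_rotation_def by auto
lemma plane_rotation_unitary_adj: "plane_rotation n p q G \<Longrightarrow> unitary_mat n (adj G)"
  unfolding plane_rotation_def by simp

section \<open>Zero-forcing sequences of planes\<close>

fun pivots_vanish :: "nat \<Rightarrow> ((nat \<times> nat) \<times> cmat) list \<Rightarrow> cmat \<Rightarrow> bool" where
  "pivots_vanish n [] X = True"
| "pivots_vanish n (((p,q),G) # L) X = (X p q = 0 \<and> pivots_vanish n L (congr_mat n G X))"

fun apply_rotations :: "nat \<Rightarrow> ((nat \<times> nat) \<times> cmat) list \<Rightarrow> cmat \<Rightarrow> cmat" where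
  "apply_rotations n [] X = X"
| "apply_rotations n ((pq,G) # L) X = apply_rotations n L (congr_mat n G X)"

definition plane_rotations :: "nat \<Rightarrow> ((nat \<times> nat) \<times> cmat) list \<Rightarrow> bool" where
  "plane_rotations n L \<longleftrightarrow> (\<forall>x\<in>set L. plane_rotation n (fst (fst x)) (snd (fst x)) (snd x))"

definition zero_forcing :: "nat \<Rightarrow> (nat \<times> nat) list \<Rightarrow> bool" where
  "zero_forcing n ps \<longleftrightarrow>
      (\<forall>L X. map fst L = ps \<longrightarrow> plane_rotations n L \<longrightarrow> hermitian_mat n X \<longrightarrow> zero_diag n X
      \<longrightarrow> pivots_vanish n L X \<longrightarrow> zero_mat n X)"

lemma zero_forcingI:
  assumes "\<And>L X. map fst L = ps \<Longrightarrow> plane_rotations n L \<Longrightarrow> hermitian_mat n X \<Longrightarrow> zero_diag n X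
      \<Longrightarrow> pivots_vanish n L X \<Longrightarrow> zero_mat n X"
  shows "zero_forcing n ps"
  using assms unfolding zero_forcing_def by blast

lemma zero_forcingD:
  assumes "zero_forcing n ps" "map fst L = ps" "plane_rotations n L" "hermitian_mat n X"
    "zero_diag n X" "pivots_vanish n L X"
  shows "zero_mat n X"
  using assms unfolding zero_forcing_def by blast

lemma plane_rotations_Cons[simp]:
    "plane_rotations n (((p,q),G) # L) \<longleftrightarrow> plane_rotation n p q G \<and> plane_rotations n L"
  unfolding plane_rotations_def by auto

lemma plane_rotations_append[simp]:
    "plane_rotations n (L1 @ L2) \<longleftrightarrow> plane_rotations n L1 \<and> plane_rotations n L2"
  unfolding plane_rotations_def by auto

lemma plane_rotations_Nil[simp]: "plane_rotations n []" unfolding plane_rotations_def by auto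

lemma pivots_vanish_append: "pivots_vanish n (L1 @ L2) X \<longleftrightarrow> pivots_vanish n L1 X \<and>
    pivots_vanish n L2 (apply_rotations n L1 X)"
  by (induction L1 arbitrary: X) auto

lemma apply_rotations_append: "apply_rotations n (L1 @ L2) X =
    apply_rotations n L2 (apply_rotations n L1 X)"
  by (induction L1 arbitrary: X) auto

lemma pivots_vanish_preserves:
    "plane_rotations n L \<Longrightarrow> hermitian_mat n X \<Longrightarrow> zero_diag n X \<Longrightarrow> pivots_vanish n L X \<Longrightarrow>
   hermitian_mat n (apply_rotations n L X) \<and> zero_diag n (apply_rotations n L X)"
proof (induction L arbitrary: X)
  case Nil then show ?case by simp
next
  case (Cons a L)
  obtain p q G where a: "a = ((p,q),G)" by (metis prod.collapse)
  have r: "plane_rotation n p q G" "plane_rotations n L" using Cons.prems(1) a by auto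
  have x: "X p q = 0" "pivots_vanish n L (congr_mat n G X)" using Cons.prems(4) a by auto
  have "hermitian_mat n (congr_mat n G X)" by (rule hermitian_congr_mat[OF Cons.prems(2)])
  moreover have "zero_diag n (congr_mat n G X)"
    using zero_diag_congr_mat[OF plane_rotation_in_plane[OF r(1)] _ _ _ Cons.prems(2,3) x(1)]
        plane_rotation_range[OF r(1)]
    by blast
  ultimately show ?case using Cons.IH[OF r(2) _ _ x(2)] a by simp
qed

lemma zero_mat_congr_mat_rotation: assumes "plane_rotation n p q G" "zero_mat n (congr_mat n G X)"
  shows "zero_mat n X"
proof -
  have e: "mat_eq n (congr_mat n (adj G) (congr_mat n G X)) X"
    by (rule congr_mat_adj_cancel[OF plane_rotation_unitary_adj[OF assms(1)]])
  have "congr_mat n (adj G) (congr_mat n G X) r s = 0" for r s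
    by (rule congr_mat_of_zero, use assms(2) in \<open>simp add: zero_mat_def\<close>)
  then show ?thesis using e unfolding zero_mat_def mat_eq_def by auto
qed

lemma zero_mat_apply_rotations: "plane_rotations n L \<Longrightarrow>
    zero_mat n (apply_rotations n L X) \<Longrightarrow> zero_mat n X"
proof (induction L arbitrary: X)
  case Nil then show ?case by simp
next
  case (Cons a L)
  obtain p q G where a: "a = ((p,q),G)" by (metis prod.collapse)
  have r: "plane_rotation n p q G" "plane_rotations n L" using Cons.prems(1) a by auto
  have "zero_mat n (congr_mat n G X)" using Cons.IH[OF r(2)] Cons.prems(2) a by simp
  then show ?case using zero_mat_congr_mat_rotation[OF r(1)] by blast
qed

lemma pivots_vanish_cong: "plane_rotations n L \<Longrightarrow> mat_eq n X Y \<Longrightarrow>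
    pivots_vanish n L X = pivots_vanish n L Y"
proof (cases L)
  case Nil then show ?thesis by simp
next
  case (Cons a L')
  obtain p q G where a: "a = ((p,q),G)" by (metis prod.collapse)
  assume "plane_rotations n L" "mat_eq n X Y"
  then show ?thesis using Cons a congr_mat_cong[of n X Y G] plane_rotation_range[of n p q G]
    unfolding mat_eq_def by auto
qed

lemma zero_forcing_append_right:
  assumes "zero_forcing n ps" shows "zero_forcing n (ps @ rs)"
proof (rule zero_forcingI)
  fix L X assume "map fst L = ps @ rs" "plane_rotations n L" "hermitian_mat n X" "zero_diag n X"
    "pivots_vanish n L X"
  moreover obtain L1 L2 where "L = L1 @ L2" "map fst L1 = ps"
    using \<open>map fst L = ps @ rs\<close> by (metis map_eq_append_conv)
  ultimately show "zero_mat n X" using zero_forcingD[OF assms] by (simp add: pivots_vanish_append)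
qed

lemma zero_forcing_append_left:
  assumes g: "zero_forcing n ps" shows "zero_forcing n (qs @ ps)"
proof (rule zero_forcingI)
  fix L X assume m: "map fst L = qs @ ps" and r: "plane_rotations n L" and h: "hermitian_mat n X"
    and z: "zero_diag n X" and zz: "pivots_vanish n L X"
  obtain L1 L2 where L: "L = L1 @ L2" "map fst L1 = qs" "map fst L2 = ps"
    using m by (metis map_eq_append_conv)
  have zz': "pivots_vanish n L1 X" "pivots_vanish n L2 (apply_rotations n L1 X)"
    using zz L by (auto simp: pivots_vanish_append)
  have r': "plane_rotations n L1" "plane_rotations n L2" using r L by auto
  have "hermitian_mat n (apply_rotations n L1 X) \<and> zero_diag n (apply_rotations n L1 X)"
    by (rule pivots_vanish_preserves[OF r'(1) h z zz'(1)])
  then have "zero_mat n (apply_rotations n L1 X)" using zero_forcingD[OF g L(3) r'(2) _ _ zz'(2)]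
    by blast
  then show "zero_mat n X" by (rule zero_mat_apply_rotations[OF r'(1)])
qed

section \<open>Invariance under equivalences of orderings\<close>

definition disjoint_pairs :: "nat \<times> nat \<Rightarrow> nat \<times> nat \<Rightarrow> bool" where
  "disjoint_pairs a b \<longleftrightarrow> {fst a, snd a} \<inter> {fst b, snd b} = {}"

lemma congr_mat_cong_transform:
  assumes "mat_eq n M M'" shows "mat_eq n (congr_mat n M Y) (congr_mat n M' Y)"
  unfolding mat_eq_def congr_mat_def
proof (intro ballI)
  fix r s assume rs: "r \<in> {1..n}" "s \<in> {1..n}"
  have a: "mat_eq n (adj M) (adj M')" using assms unfolding mat_eq_def adj_def by auto
  have "mmult n (mmult n (adj M) Y) M r s = mmult n (mmult n (adj M) Y) M' r s"
    by (rule mmult_cong_right[OF assms rs(2)])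
  also have "\<dots> = mmult n (mmult n (adj M') Y) M' r s"
    unfolding mmult_def[of n "mmult n (adj M) Y"] mmult_def[of n "mmult n (adj M') Y"]
    by (rule sum.cong[OF refl], subst mmult_cong_left[OF a rs(1)], rule refl)
  finally show "mmult n (mmult n (adj M) Y) M r s = mmult n (mmult n (adj M') Y) M' r s" .
qed

lemma mmult_disjoint_planes:
  assumes Ga: "in_plane n a1 a2 Ga" and Gb: "in_plane n b1 b2 Gb"
    and ra: "a1 \<in> {1..n}" "a2 \<in> {1..n}" "a1 \<noteq> a2" and rb: "b1 \<in> {1..n}" "b2 \<in> {1..n}"
    and d: "{a1,a2} \<inter> {b1,b2} = {}" and rs: "r \<in> {1..n}" "s \<in> {1..n}"
  shows "mmult n Gb Ga r s = (if s \<in> {a1,a2} then Ga r s else Gb r s)"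
proof (cases "s \<in> {a1,a2}")
  case True
  have "mmult n Gb Ga r s = (\<Sum>t\<in>{a1,a2}. Gb r t * Ga t s)"
    using mmult_in_plane_right[OF Ga ra(1,2) rs(2)] True by (simp add: plane_support_def)
  also have "\<dots> = (\<Sum>t\<in>{a1,a2}. idm r t * Ga t s)"
    by (rule sum.cong[OF refl], use Gb d rs ra in \<open>auto simp: in_plane_def\<close>)
  also have "\<dots> = Ga r s"
    using ra(3) Ga rs True unfolding idm_def in_plane_def by auto
  finally show ?thesis using True by simp
next
  case False
  have "mmult n Gb Ga r s = Gb r s * Ga s s"
    using mmult_in_plane_right[OF Ga ra(1,2) rs(2)] False by (simp add: plane_support_def)
  then show ?thesis using False in_plane_diag[OF Ga rs(2)] by simp
qed

lemma disjoint_plane_rotations_commute: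
  assumes a: "plane_rotation n a1 a2 Ga" and b: "plane_rotation n b1 b2 Gb"
    and d: "{a1,a2} \<inter> {b1,b2} = {}"
  shows "mat_eq n (mmult n Gb Ga) (mmult n Ga Gb)"
  unfolding mat_eq_def
proof (intro ballI)
  fix r s assume rs: "r \<in> {1..n}" "s \<in> {1..n}"
  have A: "in_plane n a1 a2 Ga" "a1 \<in> {1..n}" "a2 \<in> {1..n}" "a1 \<noteq> a2"
    using plane_rotation_in_plane[OF a] plane_rotation_range[OF a] by auto
  have B: "in_plane n b1 b2 Gb" "b1 \<in> {1..n}" "b2 \<in> {1..n}" "b1 \<noteq> b2"
    using plane_rotation_in_plane[OF b] plane_rotation_range[OF b] by auto
  have d': "{b1,b2} \<inter> {a1,a2} = {}" using d by auto
  show "mmult n Gb Ga r s = mmult n Ga Gb r s"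
    unfolding mmult_disjoint_planes[OF A(1) B(1) A(2-4) B(2,3) d rs]
        mmult_disjoint_planes[OF B(1) A(1) B(2-4) A(2,3) d' rs]
    using A(1) B(1) rs d unfolding in_plane_def by auto
qed

lemma pivots_vanish_swap:
  assumes a: "plane_rotation n a1 a2 Ga" and b: "plane_rotation n b1 b2 Gb"
    and d: "{a1,a2} \<inter> {b1,b2} = {}"
    and z: "pivots_vanish n [((b1,b2),Gb),((a1,a2),Ga)] Y"
  shows "pivots_vanish n [((a1,a2),Ga),((b1,b2),Gb)] Y"
proof -
  have A: "in_plane n a1 a2 Ga" "a1 \<in> {1..n}" "a2 \<in> {1..n}" "a1 \<noteq> a2"
    using plane_rotation_in_plane[OF a] plane_rotation_range[OF a] by auto
  have B: "in_plane n b1 b2 Gb" "b1 \<in> {1..n}" "b2 \<in> {1..n}" "b1 \<noteq> b2"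
    using plane_rotation_in_plane[OF b] plane_rotation_range[OF b] by auto
  have z1: "Y b1 b2 = 0" "congr_mat n Gb Y a1 a2 = 0" using z by auto
  have "congr_mat n Gb Y a1 a2 = Y a1 a2"
    by (rule congr_mat_out_out[OF B(1-3) A(2,3)], use d in auto)
  moreover have "congr_mat n Ga Y b1 b2 = Y b1 b2"
    by (rule congr_mat_out_out[OF A(1-3) B(2,3)], use d in auto)
  ultimately show ?thesis using z1 by simp
qed

lemma apply_rotations_swap:
  assumes a: "plane_rotation n a1 a2 Ga" and b: "plane_rotation n b1 b2 Gb"
    and d: "{a1,a2} \<inter> {b1,b2} = {}"
  shows "mat_eq n (apply_rotations n [((a1,a2),Ga),((b1,b2),Gb)] Y)
      (apply_rotations n [((b1,b2),Gb),((a1,a2),Ga)] Y)"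
  using congr_mat_cong_transform[OF disjoint_plane_rotations_commute[OF b a], of Y] d
  by (simp add: congr_mat_congr_mat Int_commute)

lemma zero_forcing_swap:
  assumes g: "zero_forcing n (xs @ [a,b] @ ys)" and d: "disjoint_pairs a b"
  shows "zero_forcing n (xs @ [b,a] @ ys)"
proof (rule zero_forcingI)
  fix L X assume m: "map fst L = xs @ [b,a] @ ys" and r: "plane_rotations n L"
    and h: "hermitian_mat n X"
    and z: "zero_diag n X" and zz: "pivots_vanish n L X"
  obtain L1 L3 where L: "L = L1 @ L3" "xs = map fst L1" "[b,a] @ ys = map fst L3"
    using map_eq_append_conv[THEN iffD1, OF m] by blast
  define L2 where "L2 = take 2 L3"
  define L4 where "L4 = drop 2 L3"
  have L': "L3 = L2 @ L4" "map fst L2 = [b,a]" "map fst L4 = ys"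
    unfolding L2_def L4_def
      apply simp
     apply (simp only: take_map[symmetric] L(3)[symmetric], simp)
    apply (simp only: drop_map[symmetric] L(3)[symmetric], simp)
    done
  have "\<exists>Gb Ga. L2 = [(b,Gb),(a,Ga)]"
    using L'(2) by (cases L2; cases "tl L2"; auto)
  then obtain Gb Ga where L2: "L2 = [(b,Gb),(a,Ga)]" by blast
  obtain a1 a2 b1 b2 where ab: "a = (a1,a2)" "b = (b1,b2)" by (metis prod.collapse)
  have "plane_rotations n (L1 @ [((b1,b2),Gb),((a1,a2),Ga)] @ L4)" using r L L' L2 ab by simp
  then have rr: "plane_rotations n L1" "plane_rotation n a1 a2 Ga" "plane_rotation n b1 b2 Gb"
      "plane_rotations n L4"
    by simp_all
  have d': "{a1,a2} \<inter> {b1,b2} = {}" using d ab by (simp add: disjoint_pairs_def)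
  define Y where "Y = apply_rotations n L1 X"
  have zs: "pivots_vanish n L1 X" "pivots_vanish n [((b1,b2),Gb),((a1,a2),Ga)] Y"
    "pivots_vanish n L4 (apply_rotations n [((b1,b2),Gb),((a1,a2),Ga)] Y)"
    using zz unfolding L L' L2 ab pivots_vanish_append Y_def by simp_all
  let ?L = "L1 @ [((a1,a2),Ga),((b1,b2),Gb)] @ L4"
  have "pivots_vanish n ?L X"
    unfolding pivots_vanish_append apply_rotations_append Y_def[symmetric]
    using zs pivots_vanish_swap[OF rr(2,3) d' zs(2)]
        pivots_vanish_cong[OF rr(4) apply_rotations_swap[OF rr(2,3) d', of Y]]
    by simp
  moreover have "map fst ?L = xs @ [a,b] @ ys" using L L' ab by simp
  moreover have "plane_rotations n ?L" using rr by simp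
  ultimately show "zero_mat n X" using zero_forcingD[OF g _ _ h z] by blast
qed

definition disjoint_swap :: "(nat \<times> nat) list \<Rightarrow> (nat \<times> nat) list \<Rightarrow> bool" where
  "disjoint_swap x y \<longleftrightarrow> (\<exists>xs a b ys. x = xs @ [a,b] @ ys \<and> y = xs @ [b,a] @ ys \<and> disjoint_pairs a b)"

lemma zero_forcing_disjoint_swap: "disjoint_swap x y \<Longrightarrow> zero_forcing n x \<Longrightarrow> zero_forcing n y"
  unfolding disjoint_swap_def using zero_forcing_swap by blast

lemma disjoint_swap_context: "disjoint_swap x y \<Longrightarrow> disjoint_swap (zs @ x @ ws) (zs @ y @ ws)"
  unfolding disjoint_swap_def by (metis append.assoc)

lemma zero_forcing_disjoint_swaps: "disjoint_swap\<^sup>*\<^sup>* x y \<Longrightarrow> zero_forcing n x \<Longrightarrow> zero_forcing n y"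
  by (induction rule: rtranclp_induct) (auto intro: zero_forcing_disjoint_swap)

lemma disjoint_swaps_context: "disjoint_swap\<^sup>*\<^sup>* x y \<Longrightarrow>
    disjoint_swap\<^sup>*\<^sup>* (zs @ x @ ws) (zs @ y @ ws)"
proof (induction rule: rtranclp_induct)
  case base then show ?case by simp
next
  case (step y z) then show ?case by (meson rtranclp.rtrancl_into_rtrancl disjoint_swap_context)
qed

definition sweeps :: "nat \<Rightarrow> (nat \<times> nat) list \<Rightarrow> (nat \<times> nat) list" where
  "sweeps m x = concat (replicate m x)"

lemma sweeps_Suc: "sweeps (Suc m) x = x @ sweeps m x" unfolding sweeps_def by simp
lemma sweeps_0: "sweeps 0 x = []" unfolding sweeps_def by simp

lemma sweeps_nth: "l < m * length os \<Longrightarrow> sweeps m os ! l = os ! (l mod length os)"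
proof (induction m arbitrary: l)
  case 0 then show ?case by simp
next
  case (Suc m)
  show ?case
  proof (cases "l < length os")
    case True then show ?thesis by (simp add: sweeps_Suc nth_append)
  next
    case False
    then have "l - length os < m * length os" using Suc.prems by simp
    then have "sweeps m os ! (l - length os) = os ! ((l - length os) mod length os)"
      by (rule Suc.IH)
    moreover have "(l - length os) mod length os = l mod length os" using False
      by (simp add: mod_if le_mod_geq)
    ultimately show ?thesis using False by (simp add: sweeps_Suc nth_append)
  qed
qed

lemma length_sweeps: "length (sweeps m os) = m * length os"
  by (induction m) (simp_all add: sweeps_Suc sweeps_0)

lemma sweeps_eq_map_cyclic_strategy: "sweeps m os = map (cyclic_strategy os) [0..<m * length os]"
  by (rule nth_equalityI) (simp_all add: length_sweeps sweeps_nth cyclic_strategy_def)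

lemma disjoint_swaps_sweeps: "disjoint_swap\<^sup>*\<^sup>* x y \<Longrightarrow> disjoint_swap\<^sup>*\<^sup>* (sweeps m x) (sweeps m y)"
proof (induction m)
  case 0 then show ?case by (simp add: sweeps_0)
next
  case (Suc m)
  have 1: "disjoint_swap\<^sup>*\<^sup>* (x @ sweeps m x) (y @ sweeps m x)"
    using disjoint_swaps_context[OF Suc.prems, of "[]" "sweeps m x"] by simp
  have 2: "disjoint_swap\<^sup>*\<^sup>* (y @ sweeps m x) (y @ sweeps m y)"
    using disjoint_swaps_context[OF Suc.IH[OF Suc.prems], of y "[]"] by simp
  show ?case unfolding sweeps_Suc using 1 2 by simp
qed

lemma adm_transp_disjoint_swap: assumes "adm_transp os osA" shows "disjoint_swap osA os"
proof -
  obtain t where t: "Suc t < length os"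
    "{fst (os ! t), snd (os ! t)} \<inter> {fst (os ! Suc t), snd (os ! Suc t)} = {}"
    "osA = os[t := os ! Suc t, Suc t := os ! t]"
    using assms unfolding adm_transp_def by blast
  define xs where "xs = take t os"
  define ys where "ys = drop (Suc (Suc t)) os"
  have e1: "os = xs @ [os ! t, os ! Suc t] @ ys"
    unfolding xs_def ys_def using t(1)
    by (metis Cons_nth_drop_Suc Suc_lessD append_Cons append_Nil append_take_drop_id)
  have e2: "osA = xs @ [os ! Suc t, os ! t] @ ys"
    unfolding t(3)
    by (subst e1, simp add: xs_def list_update_append, use t(1) in \<open>simp add: min_def\<close>)
  show ?thesis unfolding disjoint_swap_def disjoint_pairs_def using e1 e2 t(2) by blast
qed

lemma equiv_ord_disjoint_swaps: "equiv_ord os osA \<Longrightarrow> disjoint_swap\<^sup>*\<^sup>* osA os"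
  unfolding equiv_ord_def
proof (induction rule: rtranclp_induct)
  case base then show ?case by simp
next
  case (step y z)
  then show ?case using adm_transp_disjoint_swap by (meson converse_rtranclp_into_rtranclp)
qed

definition inverse_rotations :: "((nat \<times> nat) \<times> cmat) list \<Rightarrow> ((nat \<times> nat) \<times> cmat) list" where
  "inverse_rotations L = rev (map (\<lambda>(pq,G). (pq, adj G)) L)"

lemma plane_rotation_adj: assumes "plane_rotation n p q G" shows "plane_rotation n p q (adj G)"
proof -
  have "in_plane n p q (adj G)" using plane_rotation_in_plane[OF assms]
    unfolding in_plane_def adj_def idm_def
    by (metis complex_cnj_one complex_cnj_zero)
  moreover have "G p p \<noteq> 0" "G q q \<noteq> 0" using assms unfolding plane_rotation_def by auto
  then have "adj G p p \<noteq> 0" "adj G q q \<noteq> 0" by (simp_all add: adj_def)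
  ultimately show ?thesis using assms unfolding plane_rotation_def by simp
qed

lemma pivots_vanish_inverse_rotations:
    "plane_rotations n L \<Longrightarrow> hermitian_mat n X \<Longrightarrow> zero_diag n X \<Longrightarrow> pivots_vanish n L X \<Longrightarrow>
  pivots_vanish n (inverse_rotations L) (apply_rotations n L X) \<and> mat_eq n
      (apply_rotations n (inverse_rotations L) (apply_rotations n L X)) X"
proof (induction L arbitrary: X)
  case Nil then show ?case by (simp add: inverse_rotations_def mat_eq_def)
next
  case (Cons a L0)
  obtain p q G where a: "a = ((p,q),G)" by (metis prod.collapse)
  have r: "plane_rotation n p q G" "plane_rotations n L0" using Cons.prems(1) a by auto
  have pq: "in_plane n p q G" "p \<in> {1..n}" "q \<in> {1..n}" "p \<noteq> q"
    using plane_rotation_in_plane[OF r(1)] plane_rotation_range[OF r(1)] by auto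
  have x: "X p q = 0" "pivots_vanish n L0 (congr_mat n G X)" using Cons.prems(4) a by auto
  define X1 where "X1 = congr_mat n G X"
  have h1: "hermitian_mat n X1" unfolding X1_def by (rule hermitian_congr_mat[OF Cons.prems(2)])
  have z1: "zero_diag n X1" unfolding X1_def
    by (rule zero_diag_congr_mat[OF pq Cons.prems(2,3) x(1)])
  have IH: "pivots_vanish n (inverse_rotations L0) (apply_rotations n L0 X1)"
      "mat_eq n (apply_rotations n (inverse_rotations L0) (apply_rotations n L0 X1)) X1"
    using Cons.IH[OF r(2) h1 z1] x(2) unfolding X1_def by auto
  have aL: "inverse_rotations (a # L0) = inverse_rotations L0 @ [((p,q), adj G)]"
    unfolding inverse_rotations_def a by simp
  have rl: "apply_rotations n (a # L0) X = apply_rotations n L0 X1" unfolding a X1_def by simp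
  have X1pq: "X1 p q = 0"
  proof -
    have "X p p = 0" "X q q = 0" using Cons.prems(3) pq by (auto simp: zero_diag_def)
    then show ?thesis unfolding X1_def
      using congr_mat_block_zero[OF pq pq(2,3) _ _ _ _ x(1)
          hermitian_zero_swap[OF Cons.prems(2) pq(2,3) x(1)]]
      by simp
  qed
  have "apply_rotations n (inverse_rotations L0) (apply_rotations n L0 X1) p q = 0"
    using IH(2) X1pq pq unfolding mat_eq_def by auto
  then have zpa: "pivots_vanish n (inverse_rotations (a # L0)) (apply_rotations n (a # L0) X)"
    unfolding aL rl pivots_vanish_append using IH(1) by simp
  have "apply_rotations n (inverse_rotations (a # L0)) (apply_rotations n (a # L0) X) =
      congr_mat n (adj G) (apply_rotations n (inverse_rotations L0) (apply_rotations n L0 X1))"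
    unfolding aL rl apply_rotations_append by simp
  also have "\<dots> = congr_mat n (adj G) X1" by (rule congr_mat_cong[OF IH(2)])
  finally have "mat_eq n
      (apply_rotations n (inverse_rotations (a # L0)) (apply_rotations n (a # L0) X)) X"
    using congr_mat_adj_cancel[OF plane_rotation_unitary_adj[OF r(1)], of X] unfolding X1_def
    by simp
  then show ?case using zpa by simp
qed

lemma zero_forcing_rev:
  assumes g: "zero_forcing n ps" shows "zero_forcing n (rev ps)"
proof (rule zero_forcingI)
  fix L X assume m: "map fst L = rev ps" and r: "plane_rotations n L" and h: "hermitian_mat n X"
    and z: "zero_diag n X" and zz: "pivots_vanish n L X"
  have m': "map fst (inverse_rotations L) = ps" unfolding inverse_rotations_def using m
    by (simp add: rev_map[symmetric] case_prod_beta comp_def)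
  have r': "plane_rotations n (inverse_rotations L)" using r
    unfolding plane_rotations_def inverse_rotations_def
    by (auto simp: plane_rotation_adj case_prod_beta)
  have hz: "hermitian_mat n (apply_rotations n L X) \<and> zero_diag n (apply_rotations n L X)"
    by (rule pivots_vanish_preserves[OF r h z zz])
  have "pivots_vanish n (inverse_rotations L) (apply_rotations n L X)"
    using pivots_vanish_inverse_rotations[OF r h z zz] by simp
  then have "zero_mat n (apply_rotations n L X)" using zero_forcingD[OF g m' r'] hz by blast
  then show "zero_mat n X" by (rule zero_mat_apply_rotations[OF r])
qed

definition relabel :: "(nat \<Rightarrow> nat) \<Rightarrow> cmat \<Rightarrow> cmat" where
  "relabel q A = (\<lambda>r s. A (inv q r) (inv q s))"

definition relabel_pair :: "(nat \<Rightarrow> nat) \<Rightarrow> nat \<times> nat \<Rightarrow> nat \<times> nat" where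
  "relabel_pair q = (\<lambda>(i,j). (min (q i) (q j), max (q i) (q j)))"

lemma mmult_relabel: assumes q: "q permutes {1..n}"
  shows "mmult n (relabel q A) (relabel q B) = relabel q (mmult n A B)"
proof (intro ext)
  fix r s
  have "mmult n A B (inv q r) (inv q s) = (\<Sum>u\<in>{1..n}. A (inv q r) u * B u (inv q s))"
    unfolding mmult_def ..
  also have "\<dots> = (\<Sum>t\<in>{1..n}. A (inv q r) (inv q t) * B (inv q t) (inv q s))"
    by (subst sum.permute[OF permutes_inv[OF q]], simp add: comp_def)
  finally show "mmult n (relabel q A) (relabel q B) r s = relabel q (mmult n A B) r s"
    unfolding relabel_def mmult_def by simp
qed

lemma adj_relabel: "adj (relabel q A) = relabel q (adj A)" unfolding adj_def relabel_def by simp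

lemma congr_mat_relabel: "q permutes {1..n} \<Longrightarrow>
    congr_mat n (relabel q G) (relabel q X) = relabel q (congr_mat n G X)"
  unfolding congr_mat_def adj_relabel by (simp add: mmult_relabel)

lemma permutes_inv_in: "q permutes {1..n} \<Longrightarrow> r \<in> {1..n} \<Longrightarrow> inv q r \<in> {1..n}"
  by (metis permutes_in_image permutes_inv)

lemma hermitian_relabel: "q permutes {1..n} \<Longrightarrow> hermitian_mat n X \<Longrightarrow> hermitian_mat n (relabel q X)"
  unfolding hermitian_mat_def relabel_def using permutes_inv_in by blast

lemma zero_diag_relabel: "q permutes {1..n} \<Longrightarrow> zero_diag n X \<Longrightarrow> zero_diag n (relabel q X)"
  unfolding zero_diag_def relabel_def using permutes_inv_in by blast

lemma zero_mat_relabel: assumes q: "q permutes {1..n}" and z: "zero_mat n (relabel q X)"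
  shows "zero_mat n X"
  unfolding zero_mat_def
proof (intro ballI)
  fix a b assume ab: "a \<in> {1..n}" "b \<in> {1..n}"
  have "q a \<in> {1..n}" "q b \<in> {1..n}" using ab q by (metis permutes_in_image)+
  then have "relabel q X (q a) (q b) = 0" using z unfolding zero_mat_def by blast
  then show "X a b = 0" unfolding relabel_def using permutes_inverses(2)[OF q] by simp
qed

lemma idm_permutes_inv: "q permutes S \<Longrightarrow> idm (inv q r) (inv q s) = idm r s"
  unfolding idm_def by (metis permutes_inverses(1))

lemma plane_rotation_relabel: assumes q: "q permutes {1..n}" and G: "plane_rotation n a b G"
  shows "plane_rotation n (fst (relabel_pair q (a,b))) (snd (relabel_pair q (a,b))) (relabel q G)"
proof -
  have ab: "a \<in> {1..n}" "b \<in> {1..n}" "a \<noteq> b" using plane_rotation_range[OF G] by auto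
  have qab: "q a \<in> {1..n}" "q b \<in> {1..n}" "q a \<noteq> q b"
    using ab q by (metis permutes_in_image, metis permutes_in_image, metis permutes_inverses(2))
  have iq: "inv q (q a) = a" "inv q (q b) = b" using permutes_inverses(2)[OF q] by auto
  have unitary: "unitary_mat n (relabel q A)" if A: "unitary_mat n A" for A
    unfolding unitary_mat_def adj_relabel mmult_relabel[OF q]
  proof (intro ballI)
    fix r s assume "r \<in> {1..n}" "s \<in> {1..n}"
    then show "relabel q (mmult n (adj A) A) r s = idm r s"
      using A permutes_inv_in[OF q] idm_permutes_inv[OF q] unfolding unitary_mat_def relabel_def
      by metis
  qed
  have u: "unitary_mat n (relabel q G)" "unitary_mat n (adj (relabel q G))"
    using G unitary unfolding plane_rotation_def adj_relabel by auto
  have ip: "in_plane n (q a) (q b) (relabel q G)"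
    unfolding in_plane_def relabel_def
  proof (intro ballI impI)
    fix r s assume rs: "r \<in> {1..n}" "s \<in> {1..n}" and o: "r \<notin> {q a, q b} \<or> s \<notin> {q a, q b}"
    have k: "x \<in> {q a, q b}" if "inv q x \<in> {a,b}" for x
      using that permutes_inverses(1)[OF q, of x] by auto
    have o': "inv q r \<notin> {a, b} \<or> inv q s \<notin> {a, b}" using o k by blast
    show "G (inv q r) (inv q s) = idm r s"
      using plane_rotation_in_plane[OF G] o' permutes_inv_in[OF q rs(1)] permutes_inv_in[OF q rs(2)]
          idm_permutes_inv[OF q]
      unfolding in_plane_def by metis
  qed
  have d: "relabel q G (q a) (q a) \<noteq> 0" "relabel q G (q b) (q b) \<noteq> 0"
    unfolding relabel_def iq using G unfolding plane_rotation_def by auto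
  have ip': "in_plane n (min (q a) (q b)) (max (q a) (q b)) (relabel q G)"
    using ip unfolding in_plane_def by (simp add: min_def max_def insert_commute)
  show ?thesis unfolding relabel_pair_def using qab u ip' d unfolding plane_rotation_def
    by (auto simp: min_def max_def)
qed

lemma pivots_vanish_relabel:
    "q permutes {1..n} \<Longrightarrow> plane_rotations n L \<Longrightarrow> hermitian_mat n X \<Longrightarrow> pivots_vanish n L X \<Longrightarrow>
  pivots_vanish n (map (\<lambda>(pq,G). (relabel_pair q pq, relabel q G)) L) (relabel q X)"
proof (induction L arbitrary: X)
  case Nil then show ?case by simp
next
  case (Cons x L0)
  obtain a b G where x: "x = ((a,b),G)" by (metis prod.collapse)
  have r: "plane_rotation n a b G" "plane_rotations n L0" using Cons.prems(2) x by auto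
  have ab: "a \<in> {1..n}" "b \<in> {1..n}" using plane_rotation_range[OF r(1)] by auto
  have z: "X a b = 0" "pivots_vanish n L0 (congr_mat n G X)" using Cons.prems(4) x by auto
  have z2: "X b a = 0" by (rule hermitian_zero_swap[OF Cons.prems(3) ab z(1)])
  have iq: "inv q (q a) = a" "inv q (q b) = b" using permutes_inverses(2)[OF Cons.prems(1)] by auto
  have hd: "relabel q X (fst (relabel_pair q (a,b))) (snd (relabel_pair q (a,b))) = 0"
    unfolding relabel_pair_def relabel_def using z(1) z2 iq by (auto simp: min_def max_def)
  have tl: "pivots_vanish n (map (\<lambda>(pq,G). (relabel_pair q pq, relabel q G)) L0)
      (relabel q (congr_mat n G X))"
    by (rule Cons.IH[OF Cons.prems(1) r(2) hermitian_congr_mat[OF Cons.prems(3)] z(2)])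
  obtain c d where cd: "relabel_pair q (a,b) = (c,d)" by (metis prod.collapse)
  show ?case using hd tl congr_mat_relabel[OF Cons.prems(1), of G X] by (simp add: x cd)
qed

lemma zero_forcing_relabel:
  assumes q: "q permutes {1..n}" and g: "zero_forcing n (map (relabel_pair q) ps)"
  shows "zero_forcing n ps"
proof (rule zero_forcingI)
  fix L X assume m: "map fst L = ps" and r: "plane_rotations n L" and h: "hermitian_mat n X"
    and z: "zero_diag n X" and zz: "pivots_vanish n L X"
  let ?L = "map (\<lambda>(pq,G). (relabel_pair q pq, relabel q G)) L"
  have m': "map fst ?L = map (relabel_pair q) ps" using m by (auto simp: case_prod_beta)
  have r': "plane_rotations n ?L" using r plane_rotation_relabel[OF q] unfolding plane_rotations_def
    by (auto simp: case_prod_beta)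
  have "zero_mat n (relabel q X)"
    using zero_forcingD[OF g m' r' hermitian_relabel[OF q h] zero_diag_relabel[OF q z]]
      pivots_vanish_relabel[OF q r h zz] by blast
  then show "zero_mat n X" by (rule zero_mat_relabel[OF q])
qed

lemma sweeps_shift: "sweeps (Suc m) (O2 @ O1) = O2 @ sweeps m (O1 @ O2) @ O1"
  by (induction m) (simp_all add: sweeps_Suc sweeps_0)

definition sweeps_zero_forcing :: "nat \<Rightarrow> (nat \<times> nat) list \<Rightarrow> bool" where
  "sweeps_zero_forcing n x \<longleftrightarrow> (\<exists>m. zero_forcing n (sweeps m x))"

lemma sweeps_zero_forcing_shift: "sweeps_zero_forcing n (O2 @ O1) \<Longrightarrow> sweeps_zero_forcing n (O1 @ O2)"
  unfolding sweeps_zero_forcing_def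
proof (elim exE)
  fix m assume "zero_forcing n (sweeps m (O2 @ O1))"
  then have "zero_forcing n (O1 @ sweeps m (O2 @ O1) @ O2)"
    by (intro zero_forcing_append_left zero_forcing_append_right)
  then show "\<exists>m. zero_forcing n (sweeps m (O1 @ O2))" using sweeps_shift[of m O1 O2] by metis
qed

lemma sweeps_zero_forcing_equiv_ord: "equiv_ord x y \<Longrightarrow> sweeps_zero_forcing n y \<Longrightarrow>
    sweeps_zero_forcing n x"
  unfolding sweeps_zero_forcing_def
  using equiv_ord_disjoint_swaps disjoint_swaps_sweeps zero_forcing_disjoint_swaps by blast

lemma sweeps_zero_forcing_weak_equiv: "weak_equiv x y \<Longrightarrow> sweeps_zero_forcing n y \<Longrightarrow>
    sweeps_zero_forcing n x"
  unfolding weak_equiv_def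
proof (induction rule: converse_rtranclp_induct)
  case base then show ?case .
next
  case (step a b)
  have "sweeps_zero_forcing n b" using step.IH step.prems .
  then show ?case using step.hyps(1) sweeps_zero_forcing_equiv_ord sweeps_zero_forcing_shift
    unfolding shift_equiv_def by blast
qed

lemma sweeps_map: "sweeps m (map f x) = map f (sweeps m x)"
  unfolding sweeps_def by (simp add: map_concat)

lemma sweeps_zero_forcing_perm_equiv: "perm_equiv n x y \<Longrightarrow> sweeps_zero_forcing n y \<Longrightarrow>
    sweeps_zero_forcing n x"
  unfolding perm_equiv_def sweeps_zero_forcing_def
proof (elim exE conjE)
  fix q m assume q: "q permutes {1..n}"
    and y: "y = map (\<lambda>(i, j). (min (q i) (q j), max (q i) (q j))) x"
    and g: "zero_forcing n (sweeps m y)"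
  have "zero_forcing n (map (relabel_pair q) (sweeps m x))" using g
    unfolding y sweeps_map relabel_pair_def .
  then show "\<exists>m. zero_forcing n (sweeps m x)" using zero_forcing_relabel[OF q] by blast
qed

section \<open>Column- and row-cyclic orderings\<close>

lemma sum_rank_two_product:
  fixes c w v y z g :: "nat \<Rightarrow> complex"
  assumes "finite A" "finite B"
  shows "(\<Sum>b\<in>B. (\<Sum>a\<in>A. c a * (w a * y b + v a * z b)) * g b)
       = (\<Sum>a\<in>A. c a * w a) * (\<Sum>b\<in>B. y b * g b) + (\<Sum>a\<in>A. c a * v a) * (\<Sum>b\<in>B. z b * g b)"
proof -
  have "(\<Sum>b\<in>B. (\<Sum>a\<in>A. c a * (w a * y b + v a * z b)) * g b)
     = (\<Sum>b\<in>B. (\<Sum>a\<in>A. c a * w a) * (y b * g b) + (\<Sum>a\<in>A. c a * v a) * (z b * g b))"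
    by (rule sum.cong[OF refl])
        (simp add: sum_distrib_left sum_distrib_right distrib_left distrib_right
            sum.distrib mult_ac)
  also have "\<dots> = (\<Sum>a\<in>A. c a * w a) * (\<Sum>b\<in>B. y b * g b) + (\<Sum>a\<in>A. c a * v a) * (\<Sum>b\<in>B. z b * g b)"
    by (simp add: sum.distrib sum_distrib_left)
  finally show ?thesis .
qed

definition sorted_pair :: "nat \<Rightarrow> nat \<Rightarrow> nat \<times> nat" where
  "sorted_pair c p = (min c p, max c p)"

lemma congr_mat_rank_two:
  assumes G: "in_plane n p q G" and pq: "p \<in> {1..n}" "q \<in> {1..n}" "p \<noteq> q"
    and S: "S \<subseteq> {1..n}" "p \<in> S" "q \<in> S"
    and X: "\<forall>a\<in>S. \<forall>b\<in>S. X a b = w a * cnj (v b) + v a * cnj (w b)"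
    and rs: "r \<in> S" "s \<in> S"
  shows "congr_mat n G X r s = (\<Sum>a\<in>plane_support p q r. cnj (G a r) * w a) * cnj
      (\<Sum>a\<in>plane_support p q s. cnj (G a s) * v a)
                       + (\<Sum>a\<in>plane_support p q r. cnj (G a r) * v a) * cnj
                           (\<Sum>a\<in>plane_support p q s. cnj (G a s) * w a)"
proof -
  have rs': "r \<in> {1..n}" "s \<in> {1..n}" using rs S by auto
  have sub: "plane_support p q x \<subseteq> S" if "x \<in> S" for x using that S unfolding plane_support_def
    by auto
  have fin: "finite (plane_support p q x)" for x unfolding plane_support_def by auto
  have "congr_mat n G X r s =
      (\<Sum>b\<in>plane_support p q s. (\<Sum>a\<in>plane_support p q r. cnj (G a r) * X a b) * G b s)"
    by (rule congr_mat_in_plane[OF G pq(1,2) rs'])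
  also have "\<dots> = (\<Sum>b\<in>plane_support p q s. (\<Sum>a\<in>plane_support p q r. cnj (G a r) * (w a * cnj (v b) +
      v a * cnj (w b))) * G b s)"
    by (intro sum.cong refl arg_cong2[where f="(*)"]) (use X sub rs in blast)
  also have "\<dots> = (\<Sum>a\<in>plane_support p q r. cnj (G a r) * w a) *
      (\<Sum>b\<in>plane_support p q s. cnj (v b) * G b s)
       + (\<Sum>a\<in>plane_support p q r. cnj (G a r) * v a) * (\<Sum>b\<in>plane_support p q s. cnj (w b) * G b s)"
    by (rule sum_rank_two_product[OF fin fin])
  finally show ?thesis by (simp add: cnj_sum mult.commute)
qed

lemma plane_support_sorted_pair: "plane_support (min c p) (max c p) r = plane_support c p r"
  unfolding plane_support_def by (auto simp: min_def max_def)

text \<open>The column argument: on \<open>S\<close>, a Hermitian matrix that vanishes on \<open>(S - {c}) \<times> (S - {c})\<close>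
  has the rank-two form \<open>w v\<^sup>* + v w\<^sup>*\<close> with \<open>w = e\<^sub>c\<close> and \<open>v\<close> its column \<open>c\<close>.  Since \<open>w c \<noteq> 0\<close>,
  annihilating the pivot \<open>(c, p)\<close> forces \<open>v p = 0\<close>; the rotation then fixes \<open>v\<close> and only changes \<open>w\<close>
  in the plane, so the form persists.\<close>
lemma column_rotation_rank_two:
  assumes S: "S \<subseteq> {1..n}" "c \<in> S" "p \<in> S" "p \<noteq> c"
    and X: "\<forall>a\<in>S. \<forall>b\<in>S. X a b = w a * cnj (v b) + v a * cnj (w b)"
    and vw: "v c = 0" "w c \<noteq> 0" "w p = 0"
    and G: "plane_rotation n (min c p) (max c p) G" and pivot: "X (min c p) (max c p) = 0"
  shows "v p = 0"
    and "\<exists>w'. w' c \<noteq> 0 \<and> (\<forall>r\<in>S - {c, p}. w' r = w r) \<and>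
           (\<forall>a\<in>S. \<forall>b\<in>S. congr_mat n G X a b = w' a * cnj (v b) + v a * cnj (w' b))"
proof -
  have plane: "in_plane n (min c p) (max c p) G" "min c p \<in> {1..n}" "max c p \<in> {1..n}"
    "min c p \<noteq> max c p"
    using plane_rotation_in_plane[OF G] plane_rotation_range[OF G] by auto
  have Gcc: "G c c \<noteq> 0" using G unfolding plane_rotation_def
    by (cases "c \<le> p") (auto simp: min_def max_def)
  have S': "min c p \<in> S" "max c p \<in> S" using S by (auto simp: min_def max_def)
  show vp: "v p = 0"
  proof (cases "p < c")
    case True
    then have "v p * cnj (w c) = 0" using pivot X S vw by (simp add: min_def max_def)
    then show ?thesis using vw(2) by simp
  next
    case False
    then have "w c * cnj (v p) = 0" using pivot X S vw by (simp add: min_def max_def)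
    then show ?thesis using vw(2) by simp
  qed
  have G_diag: "G r r = 1" if "r \<in> S - {c, p}" for r
    using in_plane_diag[OF plane(1), of r] that S(1) by (auto simp: min_def max_def)
  define w' where "w' r = (\<Sum>a\<in>plane_support c p r. cnj (G a r) * w a)" for r
  have v_fixed: "(\<Sum>a\<in>plane_support c p r. cnj (G a r) * v a) = v r" if "r \<in> S" for r
    using that vp vw(1) S(4) G_diag[of r] unfolding plane_support_def by auto
  have "w' c \<noteq> 0" unfolding w'_def plane_support_def using S(4) vw Gcc by auto
  moreover have "\<forall>r\<in>S - {c, p}. w' r = w r" using G_diag unfolding w'_def plane_support_def by auto
  moreover have "\<forall>a\<in>S. \<forall>b\<in>S. congr_mat n G X a b = w' a * cnj (v b) + v a * cnj (w' b)"
    using congr_mat_rank_two[OF plane S(1) S' X] v_fixed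
    unfolding plane_support_sorted_pair w'_def by simp
  ultimately show "\<exists>w'. w' c \<noteq> 0 \<and> (\<forall>r\<in>S - {c, p}. w' r = w r) \<and>
           (\<forall>a\<in>S. \<forall>b\<in>S. congr_mat n G X a b = w' a * cnj (v b) + v a * cnj (w' b))"
    by blast
qed

lemma column_sweep_rank_two:
  assumes "S \<subseteq> {1..n}" "c \<in> S" and "\<forall>a\<in>S. \<forall>b\<in>S. X a b = w a * cnj (v b) + v a * cnj (w b)"
    and "v c = 0" "w c \<noteq> 0" and "\<forall>p\<in>set ps. p \<in> S \<and> p \<noteq> c \<and> w p = 0" "distinct ps"
    and "map fst L = map (sorted_pair c) ps" "plane_rotations n L" "pivots_vanish n L X"
  shows "(\<forall>p\<in>set ps. v p = 0) \<and>
    (\<exists>w'. \<forall>a\<in>S. \<forall>b\<in>S. apply_rotations n L X a b = w' a * cnj (v b) + v a * cnj (w' b))"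
  using assms(3-)
proof (induction ps arbitrary: L X w)
  case Nil
  then show ?case by auto
next
  case (Cons p ps)
  obtain G L' where L: "L = ((min c p, max c p), G) # L'" "map fst L' = map (sorted_pair c) ps"
    using Cons.prems(6) by (cases L) (auto simp: sorted_pair_def)
  have p: "p \<in> S" "p \<noteq> c" "w p = 0" using Cons.prems(4) by auto
  have G: "plane_rotation n (min c p) (max c p) G" "plane_rotations n L'"
    using Cons.prems(7) L(1) by auto
  have pivot: "X (min c p) (max c p) = 0" "pivots_vanish n L' (congr_mat n G X)"
    using Cons.prems(8) L(1) by auto
  note step = column_rotation_rank_two[OF assms(1,2) p(1,2) Cons.prems(1,2,3) p(3) G(1) pivot(1)]
  obtain w' where w': "w' c \<noteq> 0" "\<forall>r\<in>S - {c, p}. w' r = w r"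
    "\<forall>a\<in>S. \<forall>b\<in>S. congr_mat n G X a b = w' a * cnj (v b) + v a * cnj (w' b)"
    using step(2) by blast
  have "\<forall>p'\<in>set ps. p' \<in> S \<and> p' \<noteq> c \<and> w' p' = 0"
  proof
    fix p' assume "p' \<in> set ps"
    then have "p' \<in> S - {c, p}" "w p' = 0" using Cons.prems(4,5) by auto
    then show "p' \<in> S \<and> p' \<noteq> c \<and> w' p' = 0" using w'(2) by auto
  qed
  then have "(\<forall>p\<in>set ps. v p = 0) \<and> (\<exists>w''. \<forall>a\<in>S. \<forall>b\<in>S.
      apply_rotations n L' (congr_mat n G X) a b = w'' a * cnj (v b) + v a * cnj (w'' b))"
    using Cons.IH[OF w'(3) Cons.prems(2) w'(1) _ _ L(2) G(2) pivot(2)] Cons.prems(5) by simp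
  then show ?case using step(1) L(1) by simp
qed

lemma column_sweep_zero_block:
  assumes S: "S = insert c I" "S \<subseteq> {1..n}" "c \<notin> I" and ps: "set ps = I" "distinct ps"
    and L: "map fst L = map (sorted_pair c) ps" "plane_rotations n L"
    and X: "hermitian_mat n X" "zero_diag n X" "\<forall>a\<in>I. \<forall>b\<in>I. X a b = 0" and z: "pivots_vanish n L X"
  shows "\<forall>a\<in>S. \<forall>b\<in>S. apply_rotations n L X a b = 0"
proof -
  define v where "v a = (if a = c then 0 else X a c)" for a
  define w where "w a = (if a = c then 1 else (0::complex))" for a
  have cS: "c \<in> S" using S by auto
  have o: "\<forall>a\<in>S. \<forall>b\<in>S. X a b = w a * cnj (v b) + v a * cnj (w b)"
  proof (intro ballI)
    fix a b assume ab: "a \<in> S" "b \<in> S"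
    have "c \<in> {1..n}" "b \<in> {1..n}" using ab S by auto
    then have col: "X c b = cnj (X b c)" "X c c = 0"
      using X(1,2) unfolding hermitian_mat_def zero_diag_def by blast+
    show "X a b = w a * cnj (v b) + v a * cnj (w b)"
    proof (cases "a = c")
      case True
      show ?thesis
      proof (cases "b = c")
        case True then show ?thesis using \<open>a = c\<close> col(2) by (simp add: v_def w_def)
      next
        case False then show ?thesis using \<open>a = c\<close> col(1) by (simp add: v_def w_def)
      qed
    next
      case False
      then show ?thesis using X(3) S(1) ab by (cases "b = c") (simp_all add: v_def w_def)
    qed
  qed
  have wp: "\<forall>p\<in>set ps. p \<in> S \<and> p \<noteq> c \<and> w p = 0" using ps S unfolding w_def by auto
  have r: "(\<forall>p\<in>set ps. v p = 0) \<and>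
      (\<exists>w'. \<forall>a\<in>S. \<forall>b\<in>S. apply_rotations n L X a b = w' a * cnj (v b) + v a * cnj (w' b))"
    by (rule column_sweep_rank_two[OF S(2) cS o _ _ wp ps(2) L z]) (auto simp: v_def w_def)
  then have v0: "\<forall>a\<in>S. v a = 0" using ps S unfolding v_def by auto
  then show ?thesis using r by auto
qed

(* A column chain grows a block I of indices one index c at a time, rotating c against every index
   of I in the order ps.  Column-cyclic orderings add 2, ..., n; row-cyclic ones add n - 1, ..., 1. *)
fun column_chain :: "nat \<Rightarrow> nat set \<Rightarrow> (nat \<times> nat list) list \<Rightarrow> bool" where
  "column_chain n I [] = True"
| "column_chain n I ((c,ps) # cs) = (c \<in> {1..n} \<and> c \<notin> I \<and> set ps = I \<and> distinct ps \<and>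
    column_chain n (insert c I) cs)"

definition chain_planes :: "(nat \<times> nat list) list \<Rightarrow> (nat \<times> nat) list" where
  "chain_planes cs = concat (map (\<lambda>(c,ps). map (sorted_pair c) ps) cs)"

lemma column_chain_zero_block:
  "column_chain n I cs \<Longrightarrow> I \<subseteq> {1..n} \<Longrightarrow> map fst L = chain_planes cs \<Longrightarrow> plane_rotations n L \<Longrightarrow>
      hermitian_mat n X \<Longrightarrow>
   zero_diag n X \<Longrightarrow> \<forall>a\<in>I. \<forall>b\<in>I. X a b = 0 \<Longrightarrow> pivots_vanish n L X \<Longrightarrow>
   \<forall>a\<in>I \<union> fst ` set cs. \<forall>b\<in>I \<union> fst ` set cs. apply_rotations n L X a b = 0"
proof (induction cs arbitrary: I L X)
  case Nil then show ?case by (simp add: chain_planes_def)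
next
  case (Cons y cs)
  obtain c ps where y: "y = (c,ps)" by (metis prod.collapse)
  have ch: "c \<in> {1..n}" "c \<notin> I" "set ps = I" "distinct ps" "column_chain n (insert c I) cs"
    using Cons.prems(1) y by auto
  have "map fst L = map (sorted_pair c) ps @ chain_planes cs" using Cons.prems(3) y
    by (simp add: chain_planes_def)
  then obtain L1 L2 where L: "L = L1 @ L2" "map (sorted_pair c) ps = map fst L1"
      "chain_planes cs = map fst L2"
    using map_eq_append_conv[THEN iffD1] by metis
  have r: "plane_rotations n L1" "plane_rotations n L2" using Cons.prems(4) L by auto
  have zz: "pivots_vanish n L1 X" "pivots_vanish n L2 (apply_rotations n L1 X)"
    using Cons.prems(8) L by (auto simp: pivots_vanish_append)
  have S: "insert c I \<subseteq> {1..n}" using ch Cons.prems(2) by auto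
  have b: "\<forall>a\<in>insert c I. \<forall>b\<in>insert c I. apply_rotations n L1 X a b = 0"
    by (rule column_sweep_zero_block[OF refl S ch(2) ch(3,4) L(2)[symmetric] r(1)
        Cons.prems(5-7) zz(1)])
  have hz: "hermitian_mat n (apply_rotations n L1 X) \<and> zero_diag n (apply_rotations n L1 X)"
    by (rule pivots_vanish_preserves[OF r(1) Cons.prems(5,6) zz(1)])
  have "\<forall>a\<in>insert c I \<union> fst ` set cs. \<forall>b\<in>insert c I \<union> fst ` set cs. apply_rotations n L2
      (apply_rotations n L1 X) a b = 0"
    using Cons.IH[OF ch(5) S L(3)[symmetric] r(2) _ _ b zz(2)] hz by blast
  then show ?case unfolding L apply_rotations_append y by simp
qed

lemma zero_forcing_chain_planes:
  assumes ch: "column_chain n {i0} cs" and i0: "i0 \<in> {1..n}"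
    and full: "{1..n} \<subseteq> insert i0 (fst ` set cs)"
  shows "zero_forcing n (chain_planes cs)"
proof (rule zero_forcingI)
  fix L X assume m: "map fst L = chain_planes cs" and r: "plane_rotations n L"
    and h: "hermitian_mat n X"
    and z: "zero_diag n X" and zz: "pivots_vanish n L X"
  have "\<forall>a\<in>{i0}. \<forall>b\<in>{i0}. X a b = 0" using z i0 by (simp add: zero_diag_def)
  then have "\<forall>a\<in>{i0} \<union> fst ` set cs. \<forall>b\<in>{i0} \<union> fst ` set cs. apply_rotations n L X a b = 0"
    using column_chain_zero_block[OF ch _ m r h z _ zz] i0 by blast
  then have "zero_mat n (apply_rotations n L X)" using full unfolding zero_mat_def by blast
  then show "zero_mat n X" by (rule zero_mat_apply_rotations[OF r])
qed

lemma column_chain_col_cyclic: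
  assumes t: "\<forall>j. \<tau> j permutes {1..<j}"
  shows "Suc n - a = k \<Longrightarrow> 2 \<le> a \<Longrightarrow>
      column_chain n {1..<a} (map (\<lambda>j. (j, map (\<tau> j) [1..<j])) [a..<Suc n])"
proof (induction k arbitrary: a)
  case 0 then show ?case by simp
next
  case (Suc k)
  then have a: "a < Suc n" by simp
  have e: "[a..<Suc n] = a # [Suc a..<Suc n]" using a by (simp add: upt_conv_Cons)
  have s: "set (map (\<tau> a) [1..<a]) = {1..<a}" using permutes_image[OF t[rule_format, of a]] by simp
  have d: "distinct (map (\<tau> a) [1..<a])"
    using permutes_inj_on[OF t[rule_format, of a]] by (simp add: distinct_map inj_on_def)
  have i: "insert a {1..<a} = {1..<Suc a}" using Suc.prems(2) by auto
  have "column_chain n {1..<Suc a} (map (\<lambda>j. (j, map (\<tau> j) [1..<j])) [Suc a..<Suc n])"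
    using Suc.IH[of "Suc a"] Suc.prems by simp
  then show ?case unfolding e using a s d i Suc.prems(2) by simp
qed

lemma zero_forcing_col_cyclic: assumes n: "1 \<le> n" and os: "os \<in> col_cyclic n"
  shows "zero_forcing n os"
proof -
  obtain \<tau> where t: "\<forall>j. \<tau> j permutes {1..<j}"
    and o: "os = concat (map (\<lambda>j. map (\<lambda>i. (\<tau> j i, j)) [1..<j]) [2..<Suc n])"
    using os unfolding col_cyclic_def by blast
  define cs where "cs = map (\<lambda>j. (j, map (\<tau> j) [1..<j])) [2..<Suc n]"
  have cp0: "chain_planes cs =
      concat (map (\<lambda>j. map (\<lambda>i. sorted_pair j (\<tau> j i)) [1..<j]) [2..<Suc n])"
    unfolding chain_planes_def cs_def by (simp add: comp_def)
  have cp: "chain_planes cs = os"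
    unfolding cp0 o
  proof (rule arg_cong[where f=concat], rule map_cong[OF refl], rule map_cong[OF refl])
    fix j i assume i: "i \<in> set [1..<j]"
    have "\<tau> j i \<in> {1..<j}" using i permutes_in_image[OF t[rule_format, of j]] by simp
    then show "sorted_pair j (\<tau> j i) = (\<tau> j i, j)" unfolding sorted_pair_def by auto
  qed
  have "column_chain n {1..<2} (map (\<lambda>j. (j, map (\<tau> j) [1..<j])) [2..<Suc n])"
    by (rule column_chain_col_cyclic[OF t refl]) simp
  moreover have e: "{1..<2::nat} = {1}" by auto
  ultimately have ch: "column_chain n {1} cs" unfolding cs_def by (simp only: e)
  have "map fst cs = [2..<Suc n]" unfolding cs_def map_map by (simp add: comp_def del: upt_Suc)
  then have "fst ` set cs = {2..<Suc n}" by (metis set_map set_upt)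
  then have full: "{1..n} \<subseteq> insert 1 (fst ` set cs)" by auto
  show ?thesis using zero_forcing_chain_planes[OF ch _ full] n cp by simp
qed

lemma column_chain_row_cyclic:
  assumes t: "\<forall>i. \<tau> i permutes {Suc i..n}"
  shows "a < n \<Longrightarrow> column_chain n {Suc a..n}
      (map (\<lambda>i. (i, map (\<tau> i) [Suc i..<Suc n])) (rev [1..<Suc a]))"
proof (induction a)
  case 0 then show ?case by simp
next
  case (Suc a)
  have e: "rev [1..<Suc (Suc a)] = Suc a # rev [1..<Suc a]" by simp
  have su: "set [Suc (Suc a)..<Suc n] = {Suc (Suc a)..n}"
    by (simp only: set_upt atLeastLessThanSuc_atLeastAtMost)
  have s: "set (map (\<tau> (Suc a)) [Suc (Suc a)..<Suc n]) = {Suc (Suc a)..n}"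
    by (simp only: set_map su permutes_image[OF t[rule_format, of "Suc a"]])
  have d: "distinct (map (\<tau> (Suc a)) [Suc (Suc a)..<Suc n])"
    unfolding distinct_map su using permutes_inj_on[OF t[rule_format, of "Suc a"]] by simp
  have i: "insert (Suc a) {Suc (Suc a)..n} = {Suc a..n}" using Suc.prems by auto
  have "column_chain n {Suc a..n} (map (\<lambda>i. (i, map (\<tau> i) [Suc i..<Suc n])) (rev [1..<Suc a]))"
    using Suc.IH Suc.prems by simp
  then show ?case unfolding e using s d i Suc.prems by simp
qed

lemma zero_forcing_row_cyclic: assumes n: "1 \<le> n" and os: "os \<in> row_cyclic n"
  shows "zero_forcing n os"
proof -
  obtain \<tau> where t: "\<forall>i. \<tau> i permutes {Suc i..n}"
    and o: "os = concat (map (\<lambda>i. map (\<lambda>j. (i, \<tau> i j)) [Suc i..<Suc n]) (rev [1..<n]))"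
    using os unfolding row_cyclic_def by blast
  define cs where "cs = map (\<lambda>i. (i, map (\<tau> i) [Suc i..<Suc n])) (rev [1..<n])"
  have cp0: "chain_planes cs =
      concat (map (\<lambda>i. map (\<lambda>j. sorted_pair i (\<tau> i j)) [Suc i..<Suc n]) (rev [1..<n]))"
    unfolding chain_planes_def cs_def by (simp add: comp_def)
  have cp: "chain_planes cs = os"
    unfolding cp0 o
  proof (rule arg_cong[where f=concat], rule map_cong[OF refl], rule map_cong[OF refl])
    fix i j assume j: "j \<in> set [Suc i..<Suc n]"
    have "j \<in> {Suc i..n}" using j by (simp only: set_upt atLeastLessThanSuc_atLeastAtMost)
    then have "\<tau> i j \<in> {Suc i..n}" using permutes_in_image[OF t[rule_format, of i]] by blast
    then show "sorted_pair i (\<tau> i j) = (i, \<tau> i j)" unfolding sorted_pair_def by auto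
  qed
  have ch: "column_chain n {n} cs"
    using column_chain_row_cyclic[OF t, of "n - 1"] n unfolding cs_def by simp
  have "map fst cs = rev [1..<n]" unfolding cs_def map_map by (simp add: comp_def del: upt_Suc)
  then have "fst ` set cs = {1..<n}" by (metis set_map set_rev set_upt)
  then have full: "{1..n} \<subseteq> insert n (fst ` set cs)" by auto
  show ?thesis using zero_forcing_chain_planes[OF ch _ full] n cp by simp
qed

lemma sweeps_zero_forcing_if_zero_forcing: "zero_forcing n os \<Longrightarrow> sweeps_zero_forcing n os"
  unfolding sweeps_zero_forcing_def using zero_forcing_append_right[of n os "[]"]
  by (metis sweeps_Suc sweeps_0)

lemma sweeps_zero_forcing_serial_sp: assumes n: "1 \<le> n" and os: "os \<in> serial_sp n"
  shows "sweeps_zero_forcing n os"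
proof -
  have "zero_forcing n os"
    using os zero_forcing_col_cyclic[OF n] zero_forcing_row_cyclic[OF n]
      zero_forcing_rev[OF zero_forcing_col_cyclic[OF n]] zero_forcing_rev[OF zero_forcing_row_cyclic[OF n]]
    unfolding serial_sp_def by (metis Un_iff mem_Collect_eq rev_rev_ident)
  then show ?thesis by (rule sweeps_zero_forcing_if_zero_forcing)
qed

lemma sweeps_zero_forcing_gen_serial: assumes n: "1 \<le> n" and os: "os \<in> gen_serial n"
  shows "sweeps_zero_forcing n os"
proof -
  obtain osA osB where o: "osB \<in> serial_sp n"
    "(perm_equiv n os osA \<and> weak_equiv osA osB) \<or> (weak_equiv os osA \<and> perm_equiv n osA osB)"
    using os unfolding gen_serial_def by blast
  have "sweeps_zero_forcing n osB" by (rule sweeps_zero_forcing_serial_sp[OF n o(1)])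
  then show ?thesis using o(2) sweeps_zero_forcing_weak_equiv sweeps_zero_forcing_perm_equiv
    by blast
qed

section \<open>The off-diagonal norm\<close>

definition frob_sq :: "nat \<Rightarrow> cmat \<Rightarrow> real" where
  "frob_sq n X = (\<Sum>r\<in>{1..n}. \<Sum>s\<in>{1..n}. (cmod (X r s))\<^sup>2)"

definition diag_sq :: "nat \<Rightarrow> cmat \<Rightarrow> real" where
  "diag_sq n X = (\<Sum>r\<in>{1..n}. (cmod (X r r))\<^sup>2)"

definition off_sq :: "nat \<Rightarrow> cmat \<Rightarrow> real" where
  "off_sq n X = (\<Sum>r\<in>{1..n}. \<Sum>s\<in>{1..n}. if r = s then 0 else (cmod (X r s))\<^sup>2)"

lemma off_norm_eq_sqrt_off_sq: "off_norm n X = sqrt (off_sq n X)"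
  unfolding off_norm_def off_sq_def ..

lemma off_sq_eq_frob_sq_minus_diag_sq: "off_sq n X = frob_sq n X - diag_sq n X"
proof -
  have "(\<Sum>s\<in>{1..n}. if r = s then 0 else (cmod (X r s))\<^sup>2) =
      (\<Sum>s\<in>{1..n}. (cmod (X r s))\<^sup>2) - (cmod (X r r))\<^sup>2"
    if r: "r \<in> {1..n}" for r
  proof -
    have "(\<Sum>s\<in>{1..n}. if r = s then 0 else (cmod (X r s))\<^sup>2)
        = (\<Sum>s\<in>{1..n}. (cmod (X r s))\<^sup>2 - (if r = s then (cmod (X r s))\<^sup>2 else 0))"
      by (rule sum.cong) auto
    also have "\<dots> = (\<Sum>s\<in>{1..n}. (cmod (X r s))\<^sup>2) - (cmod (X r r))\<^sup>2"
      using r by (simp add: sum_subtractf sum.delta)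
    finally show ?thesis .
  qed
  then show ?thesis unfolding off_sq_def frob_sq_def diag_sq_def by (simp add: sum_subtractf)
qed

lemma off_sq_nonneg: "0 \<le> off_sq n X" unfolding off_sq_def by (intro sum_nonneg) auto

lemma sum_sq_unitary_combination:
  fixes x :: "nat \<Rightarrow> complex"
  assumes u: "\<forall>t\<in>R. \<forall>u\<in>R. (\<Sum>s\<in>R. G t s * cnj (G u s)) = idm t u" and f: "finite R"
  shows "(\<Sum>s\<in>R. (cmod (\<Sum>t\<in>R. x t * G t s))\<^sup>2) = (\<Sum>t\<in>R. (cmod (x t))\<^sup>2)"
proof -
  have "complex_of_real (\<Sum>s\<in>R. (cmod (\<Sum>t\<in>R. x t * G t s))\<^sup>2)
     = (\<Sum>s\<in>R. (\<Sum>t\<in>R. x t * G t s) * cnj (\<Sum>u\<in>R. x u * G u s))"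
    by (simp only: of_real_sum complex_norm_square)
  also have "\<dots> = (\<Sum>s\<in>R. \<Sum>u\<in>R. \<Sum>t\<in>R. x t * cnj (x u) * (G t s * cnj (G u s)))"
    by (simp add: cnj_sum sum_distrib_left sum_distrib_right mult_ac)
  also have "\<dots> = (\<Sum>u\<in>R. \<Sum>t\<in>R. \<Sum>s\<in>R. x t * cnj (x u) * (G t s * cnj (G u s)))"
    by (subst sum.swap, rule sum.cong[OF refl], rule sum.swap)
  also have "\<dots> = (\<Sum>u\<in>R. \<Sum>t\<in>R. x t * cnj (x u) * idm t u)"
    by (rule sum.cong[OF refl], rule sum.cong[OF refl], simp only: sum_distrib_left[symmetric],
        use u in simp)
  also have "\<dots> = (\<Sum>t\<in>R. x t * cnj (x t))"
    by (rule sum.cong[OF refl]) (simp add: idm_def f if_distrib cong: if_cong)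
  also have "\<dots> = complex_of_real (\<Sum>t\<in>R. (cmod (x t))\<^sup>2)"
    by (simp only: of_real_sum complex_norm_square)
  finally show ?thesis using of_real_eq_iff by blast
qed

lemma unitary_rows_orthonormal: "unitary_mat n (adj G) \<Longrightarrow>
  \<forall>t\<in>{1..n}. \<forall>u\<in>{1..n}. (\<Sum>s\<in>{1..n}. G t s * cnj (G u s)) = idm t u"
  unfolding unitary_mat_def mmult_def adj_def by simp

lemma frob_sq_mmult_unitary: assumes u: "unitary_mat n (adj G)"
  shows "frob_sq n (mmult n Y G) = frob_sq n Y"
  unfolding frob_sq_def mmult_def
  by (rule sum.cong[OF refl], rule
      sum_sq_unitary_combination[OF unitary_rows_orthonormal[OF u]], simp)

lemma frob_sq_mmult_adj_unitary: assumes u: "unitary_mat n (adj G)"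
  shows "frob_sq n (mmult n (adj G) Y) = frob_sq n Y"
proof -
  have "frob_sq n (mmult n (adj G) Y) =
      (\<Sum>r\<in>{1..n}. \<Sum>s\<in>{1..n}. (cmod (\<Sum>t\<in>{1..n}. cnj (Y t s) * G t r))\<^sup>2)"
    unfolding frob_sq_def mmult_def adj_def
  proof (intro sum.cong refl)
    fix r s
    have e: "cnj (\<Sum>t\<in>{1..n}. cnj (G t r) * Y t s) = (\<Sum>t\<in>{1..n}. cnj (Y t s) * G t r)"
      by (simp add: cnj_sum mult.commute)
    have "cmod (\<Sum>t\<in>{1..n}. cnj (G t r) * Y t s) = cmod (cnj (\<Sum>t\<in>{1..n}. cnj (G t r) * Y t s))"
      by (simp only: complex_mod_cnj)
    also have "\<dots> = cmod (\<Sum>t\<in>{1..n}. cnj (Y t s) * G t r)" by (simp only: e)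
    finally show "(cmod (\<Sum>t\<in>{1..n}. cnj (G t r) * Y t s))\<^sup>2 =
        (cmod (\<Sum>t\<in>{1..n}. cnj (Y t s) * G t r))\<^sup>2"
      by simp
  qed
  also have "\<dots> = (\<Sum>s\<in>{1..n}. \<Sum>r\<in>{1..n}. (cmod (\<Sum>t\<in>{1..n}. cnj (Y t s) * G t r))\<^sup>2)"
    by (rule sum.swap)
  also have "\<dots> = (\<Sum>s\<in>{1..n}. \<Sum>t\<in>{1..n}. (cmod (cnj (Y t s)))\<^sup>2)"
    by (rule sum.cong[OF refl], rule
        sum_sq_unitary_combination[OF unitary_rows_orthonormal[OF u]], simp)
  also have "\<dots> = frob_sq n Y" unfolding frob_sq_def by (simp, rule sum.swap)
  finally show ?thesis .
qed

lemma frob_sq_congr_mat: "unitary_mat n (adj G) \<Longrightarrow> frob_sq n (congr_mat n G X) = frob_sq n X"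
  unfolding congr_mat_def by (simp add: frob_sq_mmult_unitary frob_sq_mmult_adj_unitary)

lemma frob_sq_support:
  assumes B: "B \<subseteq> {1..n}" and z: "\<forall>r\<in>{1..n}. \<forall>s\<in>{1..n}. (r \<notin> B \<or> s \<notin> B) \<longrightarrow> Y r s = 0"
  shows "frob_sq n Y = (\<Sum>r\<in>B. \<Sum>s\<in>B. (cmod (Y r s))\<^sup>2)"
proof -
  have "frob_sq n Y = (\<Sum>r\<in>{1..n}. \<Sum>s\<in>B. (cmod (Y r s))\<^sup>2)"
    unfolding frob_sq_def
  proof (rule sum.cong[OF refl])
    fix r assume r: "r \<in> {1..n}"
    show "(\<Sum>s\<in>{1..n}. (cmod (Y r s))\<^sup>2) = (\<Sum>s\<in>B. (cmod (Y r s))\<^sup>2)"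
      by (rule sum.mono_neutral_right[OF _ B]) (use z r in auto)
  qed
  also have "\<dots> = (\<Sum>r\<in>B. \<Sum>s\<in>B. (cmod (Y r s))\<^sup>2)"
  proof (rule sum.mono_neutral_right[OF _ B])
    show "finite {1..n}" by simp
    show "\<forall>r\<in>{1..n} - B. (\<Sum>s\<in>B. (cmod (Y r s))\<^sup>2) = 0"
    proof
      fix r assume r: "r \<in> {1..n} - B"
      have "Y r s = 0" if "s \<in> B" for s using z r B that by auto
      then show "(\<Sum>s\<in>B. (cmod (Y r s))\<^sup>2) = 0" by simp
    qed
  qed
  finally show ?thesis .
qed

definition plane_block :: "nat \<Rightarrow> nat \<Rightarrow> cmat \<Rightarrow> cmat" where
  "plane_block p q X = (\<lambda>r s. if r \<in> {p,q} \<and> s \<in> {p,q} then X r s else 0)"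

lemma congr_mat_plane_block:
  assumes G: "in_plane n p q G" and pq: "p \<in> {1..n}" "q \<in> {1..n}" "p \<noteq> q"
    and rs: "r \<in> {1..n}" "s \<in> {1..n}"
  shows "congr_mat n G (plane_block p q X) r s = plane_block p q (congr_mat n G X) r s"
proof -
  consider "r \<in> {p,q}" "s \<in> {p,q}" | "r \<in> {p,q}" "s \<notin> {p,q}" | "r \<notin> {p,q}" "s \<in> {p,q}"
    | "r \<notin> {p,q}" "s \<notin> {p,q}" by blast
  then show ?thesis
  proof cases
    case 1 then show ?thesis by (simp add: congr_mat_in_in[OF G pq rs] plane_block_def)
  next
    case 2 then show ?thesis by (simp add: congr_mat_in_out[OF G pq rs] plane_block_def)
  next
    case 3 then show ?thesis by (simp add: congr_mat_out_in[OF G pq rs] plane_block_def)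
  next
    case 4 then show ?thesis by (simp add: congr_mat_out_out[OF G pq(1,2) rs] plane_block_def)
  qed
qed

lemma frob_sq_plane_block: "p \<in> {1..n} \<Longrightarrow> q \<in> {1..n} \<Longrightarrow> p \<noteq> q \<Longrightarrow>
  frob_sq n (plane_block p q X) = (cmod (X p p))\<^sup>2 + (cmod (X p q))\<^sup>2 + (cmod (X q p))\<^sup>2 +
      (cmod (X q q))\<^sup>2"
  by (subst frob_sq_support[of "{p,q}"]) (auto simp: plane_block_def)

lemma frob_sq_plane_block_congr_mat:
  assumes G: "plane_rotation n p q G"
  shows "frob_sq n (plane_block p q (congr_mat n G X)) = frob_sq n (plane_block p q X)"
proof -
  have pq: "in_plane n p q G" "p \<in> {1..n}" "q \<in> {1..n}" "p \<noteq> q"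
    using plane_rotation_in_plane[OF G] plane_rotation_range[OF G] by auto
  have "mat_eq n (plane_block p q (congr_mat n G X)) (congr_mat n G (plane_block p q X))"
    unfolding mat_eq_def using congr_mat_plane_block[OF pq] by simp
  then have "frob_sq n (plane_block p q (congr_mat n G X)) =
      frob_sq n (congr_mat n G (plane_block p q X))"
    unfolding frob_sq_def mat_eq_def by simp
  also have "\<dots> = frob_sq n (plane_block p q X)"
    by (rule frob_sq_congr_mat[OF plane_rotation_unitary_adj[OF G]])
  finally show ?thesis .
qed

lemma diag_sq_split: "p \<in> {1..n} \<Longrightarrow> q \<in> {1..n} \<Longrightarrow> p \<noteq> q \<Longrightarrow>
  diag_sq n X = (\<Sum>r\<in>{1..n} - {p,q}. (cmod (X r r))\<^sup>2) + (cmod (X p p))\<^sup>2 + (cmod (X q q))\<^sup>2"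
proof -
  assume pq: "p \<in> {1..n}" "q \<in> {1..n}" "p \<noteq> q"
  have "diag_sq n X = (\<Sum>r\<in>{1..n} - {p,q}. (cmod (X r r))\<^sup>2) + (\<Sum>r\<in>{p,q}. (cmod (X r r))\<^sup>2)"
    unfolding diag_sq_def using pq by (subst sum.subset_diff[of "{p,q}"]) auto
  then show ?thesis using pq by simp
qed

lemma hermitian_cmod_swap: "hermitian_mat n X \<Longrightarrow> p \<in> {1..n} \<Longrightarrow> q \<in> {1..n} \<Longrightarrow>
    cmod (X q p) = cmod (X p q)"
  unfolding hermitian_mat_def by (metis complex_mod_cnj)

lemma off_sq_congr_mat_rotation:
  assumes G: "plane_rotation n p q G" and h: "hermitian_mat n X"
  shows "off_sq n (congr_mat n G X) = off_sq n X - 2 * (cmod (X p q))\<^sup>2 +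
      2 * (cmod (congr_mat n G X p q))\<^sup>2"
proof -
  have pq: "in_plane n p q G" "p \<in> {1..n}" "q \<in> {1..n}" "p \<noteq> q"
    using plane_rotation_in_plane[OF G] plane_rotation_range[OF G] by auto
  define X' where "X' = congr_mat n G X"
  have h': "hermitian_mat n X'" unfolding X'_def by (rule hermitian_congr_mat[OF h])
  have f: "frob_sq n X' = frob_sq n X" unfolding X'_def
    by (rule frob_sq_congr_mat[OF plane_rotation_unitary_adj[OF G]])
  have b: "frob_sq n (plane_block p q X') = frob_sq n (plane_block p q X)" unfolding X'_def
    by (rule frob_sq_plane_block_congr_mat[OF G])
  have b': "(cmod (X' p p))\<^sup>2 + (cmod (X' q q))\<^sup>2 + 2 * (cmod (X' p q))\<^sup>2
          = (cmod (X p p))\<^sup>2 + (cmod (X q q))\<^sup>2 + 2 * (cmod (X p q))\<^sup>2"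
    using b unfolding frob_sq_plane_block[OF pq(2-4)] hermitian_cmod_swap[OF h pq(2,3)]
        hermitian_cmod_swap[OF h' pq(2,3)]
    by simp
  have o: "(\<Sum>r\<in>{1..n} - {p,q}. (cmod (X' r r))\<^sup>2) = (\<Sum>r\<in>{1..n} - {p,q}. (cmod (X r r))\<^sup>2)"
    unfolding X'_def by (rule sum.cong[OF refl], subst congr_mat_out_out[OF pq(1-3)], auto)
  show ?thesis
    unfolding X'_def[symmetric] off_sq_eq_frob_sq_minus_diag_sq f diag_sq_split[OF pq(2-4), of X']
        diag_sq_split[OF pq(2-4), of X] o
    using b' by simp
qed

definition off_diag :: "cmat \<Rightarrow> cmat" where
  "off_diag X = (\<lambda>r s. if r = s then 0 else X r s)"

lemma hermitian_off_diag: assumes "hermitian_mat n X" shows "hermitian_mat n (off_diag X)"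
  unfolding hermitian_mat_def
proof (intro ballI)
  fix r s assume rs: "r \<in> {1..n}" "s \<in> {1..n}"
  have "X r s = cnj (X s r)" using assms rs unfolding hermitian_mat_def by blast
  then show "off_diag X r s = cnj (off_diag X s r)" unfolding off_diag_def by simp
qed

lemma zero_diag_off_diag: "zero_diag n (off_diag X)" unfolding zero_diag_def off_diag_def by simp

lemma off_sq_off_diag: "off_sq n (off_diag X) = off_sq n X" unfolding off_sq_def off_diag_def
  by (rule sum.cong[OF refl], rule sum.cong) auto

lemma off_sq_zero_mat: "zero_mat n X \<Longrightarrow> off_sq n X = 0" unfolding off_sq_def zero_mat_def
  by (auto intro!: sum.neutral)

lemma off_diag_congr_mat:
  assumes G: "plane_rotation n p q G" and h: "hermitian_mat n X"
    and x: "X p q = 0" and x': "congr_mat n G X p q = 0"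
  shows "mat_eq n (off_diag (congr_mat n G X)) (congr_mat n G (off_diag X))"
  unfolding mat_eq_def
proof (intro ballI)
  fix r s assume rs: "r \<in> {1..n}" "s \<in> {1..n}"
  let ?goal = "off_diag (congr_mat n G X) r s = congr_mat n G (off_diag X) r s"
  have pq: "in_plane n p q G" "p \<in> {1..n}" "q \<in> {1..n}" "p \<noteq> q"
    using plane_rotation_in_plane[OF G] plane_rotation_range[OF G] by auto
  have "zero_diag n (congr_mat n G (off_diag X))"
    by (rule zero_diag_congr_mat[OF pq hermitian_off_diag[OF h] zero_diag_off_diag])
      (use x pq in \<open>simp add: off_diag_def\<close>)
  then have diag: ?goal if "r = s" using that rs by (simp add: off_diag_def zero_diag_def)
  have "X q p = 0" "congr_mat n G X q p = 0"
    using hermitian_zero_swap[OF h pq(2,3) x]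
        hermitian_zero_swap[OF hermitian_congr_mat[OF h] pq(2,3) x']
    by auto
  then have block: ?goal if "r \<noteq> s" "r \<in> {p,q}" "s \<in> {p,q}"
    using that x x' congr_mat_block_zero[OF pq rs, of "off_diag X"] by (auto simp: off_diag_def)
  consider "r = s" | "r \<noteq> s" "r \<in> {p,q}" "s \<in> {p,q}" | "r \<in> {p,q}" "s \<notin> {p,q}"
    | "r \<notin> {p,q}" "s \<in> {p,q}" | "r \<notin> {p,q}" "s \<notin> {p,q}" "r \<noteq> s" by blast
  then show ?goal
  proof cases
    case 1 then show ?thesis by (rule diag)
  next
    case 2 then show ?thesis by (rule block)
  next
    case 3 then show ?thesis by (auto simp: congr_mat_in_out[OF pq rs] off_diag_def)
  next
    case 4 then show ?thesis by (auto simp: congr_mat_out_in[OF pq rs] off_diag_def)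
  next
    case 5 then show ?thesis by (simp add: congr_mat_out_out[OF pq(1-3) rs] off_diag_def)
  qed
qed

lemma off_sq_cong: "mat_eq n X Y \<Longrightarrow> off_sq n X = off_sq n Y"
  unfolding off_sq_def mat_eq_def by (intro sum.cong refl) auto

lemma off_diag_cong: "mat_eq n X Y \<Longrightarrow> mat_eq n (off_diag X) (off_diag Y)"
  unfolding mat_eq_def off_diag_def by auto

lemma pivots_vanish_process:
  assumes step: "\<And>l. l < b \<Longrightarrow> mat_eq n (Y (Suc l)) (congr_mat n (G l) (Y l))"
    and pivot: "\<And>l. l < b \<Longrightarrow> Y l (p l) (q l) = 0"
    and rotation: "\<And>l. l < b \<Longrightarrow> plane_rotation n (p l) (q l) (G l)"
  shows "a \<le> b \<Longrightarrow> pivots_vanish n (map (\<lambda>l. ((p l, q l), G l)) [a..<b]) (Y a)"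
proof (induction a rule: inc_induct)
  case base then show ?case by simp
next
  case (step a)
  have rotations: "plane_rotations n (map (\<lambda>l. ((p l, q l), G l)) [Suc a..<b])"
    unfolding plane_rotations_def using rotation by auto
  have "pivots_vanish n (map (\<lambda>l. ((p l, q l), G l)) [Suc a..<b]) (congr_mat n (G a) (Y a))"
    using step.IH pivots_vanish_cong[OF rotations assms(1)[OF step.hyps(2)]] by simp
  then show ?case using pivot[OF step.hyps(2)] step.hyps(2) by (simp add: upt_conv_Cons)
qed

lemma off_sq_rotation_process:
  assumes rotation: "\<And>l. l < P \<Longrightarrow> plane_rotation n (p l) (q l) (G l)"
    and step: "\<And>l. l < P \<Longrightarrow> mat_eq n (X (Suc l)) (congr_mat n (G l) (X l))"
    and hermitian: "\<And>l. l < P \<Longrightarrow> hermitian_mat n (X l)"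
    and annihilated: "\<And>l. l < P \<Longrightarrow> X (Suc l) (p l) (q l) = 0"
  shows "off_sq n (X P) + 2 * (\<Sum>l<P. (cmod (X l (p l) (q l)))\<^sup>2) = off_sq n (X 0)"
proof -
  have drop: "off_sq n (X (Suc l)) = off_sq n (X l) - 2 * (cmod (X l (p l) (q l)))\<^sup>2" if
      l: "l < P" for l
  proof -
    have pq: "p l \<in> {1..n}" "q l \<in> {1..n}" using plane_rotation_range[OF rotation[OF l]] by auto
    have "off_sq n (X (Suc l)) = off_sq n (congr_mat n (G l) (X l))"
      by (rule off_sq_cong[OF step[OF l]])
    also have "\<dots> = off_sq n (X l) - 2 * (cmod (X l (p l) (q l)))\<^sup>2
                    + 2 * (cmod (congr_mat n (G l) (X l) (p l) (q l)))\<^sup>2"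
      by (rule off_sq_congr_mat_rotation[OF rotation[OF l] hermitian[OF l]])
    also have "congr_mat n (G l) (X l) (p l) (q l) = 0"
      using step[OF l] annihilated[OF l] pq unfolding mat_eq_def by auto
    finally show ?thesis by simp
  qed
  have "l \<le> P \<Longrightarrow> off_sq n (X l) + 2 * (\<Sum>l'<l. (cmod (X l' (p l') (q l')))\<^sup>2) = off_sq n (X 0)" for l
    by (induction l) (simp_all add: drop)
  then show ?thesis by simp
qed

text \<open>The off-diagonal parts form a process of the same kind, to which zero-forcing applies.\<close>
lemma off_sq_zero_rotation_process:
  assumes rotation: "\<And>l. l < P \<Longrightarrow> plane_rotation n (p l) (q l) (G l)"
    and step: "\<And>l. l < P \<Longrightarrow> mat_eq n (X (Suc l)) (congr_mat n (G l) (X l))"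
    and hermitian: "\<And>l. l \<le> P \<Longrightarrow> hermitian_mat n (X l)"
    and pivot: "\<And>l. l < P \<Longrightarrow> X l (p l) (q l) = 0"
    and annihilated: "\<And>l. l < P \<Longrightarrow> X (Suc l) (p l) (q l) = 0"
    and forcing: "zero_forcing n (map (\<lambda>l. (p l, q l)) [0..<P])"
  shows "off_sq n (X 0) = 0"
proof -
  define Y where "Y l = off_diag (X l)" for l
  have step_Y: "mat_eq n (Y (Suc l)) (congr_mat n (G l) (Y l))" if l: "l < P" for l
  proof -
    have pq: "p l \<in> {1..n}" "q l \<in> {1..n}" using plane_rotation_range[OF rotation[OF l]] by auto
    have "mat_eq n (off_diag (congr_mat n (G l) (X l))) (congr_mat n (G l) (Y l))"
      unfolding Y_def using step[OF l] annihilated[OF l] pq unfolding mat_eq_def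
      by (intro off_diag_congr_mat[OF rotation[OF l] hermitian pivot[OF l], unfolded mat_eq_def])
        (use l in auto)
    then show ?thesis unfolding Y_def using mat_eq_trans off_diag_cong[OF step[OF l]] by blast
  qed
  have pivot_Y: "Y l (p l) (q l) = 0" if "l < P" for l
    using pivot[OF that] unfolding Y_def off_diag_def by simp
  have "pivots_vanish n (map (\<lambda>l. ((p l, q l), G l)) [0..<P]) (Y 0)"
    by (rule pivots_vanish_process[where Y = Y and G = G and p = p and q = q])
      (simp_all add: step_Y pivot_Y rotation)
  moreover have "plane_rotations n (map (\<lambda>l. ((p l, q l), G l)) [0..<P])"
    unfolding plane_rotations_def using rotation by auto
  moreover have "map fst (map (\<lambda>l. ((p l, q l), G l)) [0..<P]) = map (\<lambda>l. (p l, q l)) [0..<P]"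
    by simp
  ultimately have "zero_mat n (Y 0)"
    using zero_forcingD[OF forcing] hermitian_off_diag[OF hermitian[of 0]] zero_diag_off_diag
    unfolding Y_def by blast
  then show ?thesis unfolding Y_def using off_sq_zero_mat off_sq_off_diag by metis
qed

section \<open>Limits of the process\<close>

lemma tendsto_mmult:
  assumes "\<forall>t\<in>{1..n}. (\<lambda>m. A m r t) \<longlonglongrightarrow> A0 r t" "\<forall>t\<in>{1..n}. (\<lambda>m. B m t s) \<longlonglongrightarrow> B0 t s"
  shows "(\<lambda>m. mmult n (A m) (B m) r s) \<longlonglongrightarrow> mmult n A0 B0 r s"
  unfolding mmult_def using assms by (intro tendsto_sum tendsto_mult) auto

lemma tendsto_congr_mat:
  assumes G: "\<forall>r\<in>{1..n}. \<forall>s\<in>{1..n}. (\<lambda>m. G m r s) \<longlonglongrightarrow> G0 r s"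
    and X: "\<forall>r\<in>{1..n}. \<forall>s\<in>{1..n}. (\<lambda>m. X m r s) \<longlonglongrightarrow> X0 r s"
    and rs: "r \<in> {1..n}" "s \<in> {1..n}"
  shows "(\<lambda>m. congr_mat n (G m) (X m) r s) \<longlonglongrightarrow> congr_mat n G0 X0 r s"
  unfolding congr_mat_def
proof (rule tendsto_mmult)
  show "\<forall>t\<in>{1..n}. (\<lambda>m. mmult n (adj (G m)) (X m) r t) \<longlonglongrightarrow> mmult n (adj G0) X0 r t"
    using G X rs unfolding adj_def by (intro ballI tendsto_mmult) (auto intro: tendsto_cnj)
  show "\<forall>t\<in>{1..n}. (\<lambda>m. G m t s) \<longlonglongrightarrow> G0 t s" using G rs by auto
qed

lemma tendsto_off_sq:
  assumes "\<forall>r\<in>{1..n}. \<forall>s\<in>{1..n}. (\<lambda>m. X m r s) \<longlonglongrightarrow> X0 r s"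
  shows "(\<lambda>m. off_sq n (X m)) \<longlonglongrightarrow> off_sq n X0"
  unfolding off_sq_def using assms by (intro tendsto_sum) (auto intro!: tendsto_power tendsto_norm)

lemma unitary_mat_limit:
  assumes unitary: "\<And>m. unitary_mat n (U m)"
    and lim: "\<forall>r\<in>{1..n}. \<forall>s\<in>{1..n}. (\<lambda>m. U m r s) \<longlonglongrightarrow> G r s"
  shows "unitary_mat n G"
  unfolding unitary_mat_def
proof (intro ballI)
  fix r s assume rs: "r \<in> {1..n}" "s \<in> {1..n}"
  have "(\<lambda>m. mmult n (adj (U m)) (U m) r s) \<longlonglongrightarrow> mmult n (adj G) G r s"
    using lim rs unfolding adj_def by (intro tendsto_mmult) (auto intro: tendsto_cnj)
  moreover have "(\<lambda>m. mmult n (adj (U m)) (U m) r s) = (\<lambda>m. idm r s)"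
    using unitary rs unfolding unitary_mat_def by auto
  ultimately show "mmult n (adj G) G r s = idm r s" by (metis LIMSEQ_const_iff)
qed

lemma unitary_in_plane_diag_nonzero:
  assumes u: "unitary_mat n G" "unitary_mat n (adj G)"
    and G: "in_plane n p q G" and pq: "p \<in> {1..n}" "q \<in> {1..n}" "p \<noteq> q" and d: "G p p \<noteq> 0"
  shows "G q q \<noteq> 0"
proof
  assume z: "G q q = 0"
  have Ga: "in_plane n p q (adj G)" using G unfolding in_plane_def adj_def idm_def
    by (metis complex_cnj_one complex_cnj_zero)
  have "mmult n (adj G) G q q = cnj (G p q) * G p q + cnj (G q q) * G q q"
    using mmult_adj_in_plane_left[OF G pq(1,2) pq(2)] pq(3) by (simp add: plane_support_def)
  then have e1: "cnj (G p q) * G p q = 1" using u(1) pq z by (simp add: unitary_mat_def idm_def)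
  have "mmult n G (adj G) p p = G p p * cnj (G p p) + G p q * cnj (G p q)"
    using mmult_in_plane_right[OF Ga pq(1,2) pq(1)] pq(3) by (simp add: plane_support_def adj_def)
  then have e2: "G p p * cnj (G p p) + G p q * cnj (G p q) = 1"
    using u(2) pq by (simp add: unitary_mat_def idm_def)
  have "G p p * cnj (G p p) = 0" using e1 e2 by (simp add: mult.commute)
  then show False using d by simp
qed

lemma unitary_entry_bound:
  assumes u: "unitary_mat n G" and rs: "r \<in> {1..n}" "s \<in> {1..n}"
  shows "cmod (G r s) \<le> 1"
proof -
  have "complex_of_real (\<Sum>t\<in>{1..n}. (cmod (G t s))\<^sup>2) = mmult n (adj G) G s s"
    unfolding mmult_def adj_def of_real_sum complex_norm_square by (simp add: mult.commute)
  also have "\<dots> = 1" using u rs by (simp add: unitary_mat_def idm_def)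
  finally have "(\<Sum>t\<in>{1..n}. (cmod (G t s))\<^sup>2) = 1" by (metis of_real_eq_1_iff)
  moreover have "(cmod (G r s))\<^sup>2 \<le> (\<Sum>t\<in>{1..n}. (cmod (G t s))\<^sup>2)"
    by (rule member_le_sum[OF rs(1)]) auto
  ultimately have "(cmod (G r s))\<^sup>2 \<le> 1" by simp
  then show ?thesis by (simp add: power_le_one_iff abs_le_square_iff)
qed

lemma unitary_adj_if_nonsingular:
  assumes u: "unitary_mat n G" and ns: "nonsingular_mat n G"
  shows "unitary_mat n (adj G)"
proof -
  obtain B where B: "\<forall>r\<in>{1..n}. \<forall>s\<in>{1..n}. mmult n G B r s = idm r s"
    using ns unfolding nonsingular_mat_def by blast
  have u': "\<forall>r\<in>{1..n}. \<forall>s\<in>{1..n}. mmult n (adj G) G r s = idm r s"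
    using u unfolding unitary_mat_def .
  have e: "mat_eq n (adj G) B"
    unfolding mat_eq_def
  proof (intro ballI)
    fix r s assume rs: "r \<in> {1..n}" "s \<in> {1..n}"
    have "adj G r s = mmult n (adj G) (mmult n G B) r s"
      by (rule sym, rule mmult_idm_right[OF B rs(2)])
    also have "\<dots> = mmult n (mmult n (adj G) G) B r s" by (simp add: mmult_assoc)
    also have "\<dots> = B r s" by (rule mmult_idm_left[OF u' rs(1)])
    finally show "adj G r s = B r s" .
  qed
  show ?thesis
    unfolding unitary_mat_def adj_adj using mmult_cong_right[OF e] B by simp
qed

lemma bounded_family_convergent_subseq:
  fixes f :: "'i \<Rightarrow> nat \<Rightarrow> complex"
  assumes "finite I" "\<forall>i\<in>I. \<exists>B. \<forall>m. cmod (f i m) \<le> B"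
  shows "\<exists>\<rho>. strict_mono \<rho> \<and> (\<forall>i\<in>I. convergent (\<lambda>m. f i (\<rho> m)))"
  using assms
proof (induction I rule: finite_induct)
  case empty
  have "strict_mono (id::nat\<Rightarrow>nat)" by (simp add: strict_mono_def)
  then show ?case by blast
next
  case (insert i I)
  obtain \<rho> where r: "strict_mono \<rho>" "\<forall>i\<in>I. convergent (\<lambda>m. f i (\<rho> m))"
    using insert.IH insert.prems by auto
  obtain B where B: "\<forall>m. cmod (f i m) \<le> B" using insert.prems by auto
  have "bounded (range (\<lambda>m. f i (\<rho> m)))" unfolding bounded_iff using B by auto
  then obtain l r' where r': "strict_mono r'" "((\<lambda>m. f i (\<rho> m)) \<circ> r') \<longlonglongrightarrow> l"
    using bounded_imp_convergent_subsequence by blast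
  have "\<forall>j\<in>insert i I. convergent (\<lambda>m. f j ((\<rho> \<circ> r') m))"
  proof
    fix j assume j: "j \<in> insert i I"
    show "convergent (\<lambda>m. f j ((\<rho> \<circ> r') m))"
    proof (cases "j = i")
      case True then show ?thesis using r'(2) by (auto simp: convergent_def comp_def)
    next
      case False
      then obtain L where "(\<lambda>m. f j (\<rho> m)) \<longlonglongrightarrow> L" using r(2) j by (auto simp: convergent_def)
      then have "((\<lambda>m. f j (\<rho> m)) \<circ> r') \<longlonglongrightarrow> L" by (rule LIMSEQ_subseq_LIMSEQ[OF _ r'(1)])
      then show ?thesis by (auto simp: convergent_def comp_def)
    qed
  qed
  then show ?case using r(1) r'(1) strict_mono_o by blast
qed

lemma limsup_subseq_witness:
  fixes s :: "nat \<Rightarrow> real"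
  assumes bounds: "\<And>k. a \<le> s k" "\<And>k. s k \<le> b"
  obtains A \<sigma> where "strict_mono \<sigma>" "(\<lambda>t. s (\<sigma> t)) \<longlonglongrightarrow> A"
    "\<And>e. 0 < e \<Longrightarrow> eventually (\<lambda>k. s k < A + e) sequentially"
    "\<And>\<tau> y. strict_mono \<tau> \<Longrightarrow> (\<lambda>t. s (\<tau> t)) \<longlonglongrightarrow> y \<Longrightarrow> y \<le> A"
proof -
  obtain \<sigma> where \<sigma>: "strict_mono \<sigma>" "((\<lambda>k. ereal (s k)) \<circ> \<sigma>) \<longlonglongrightarrow> limsup (\<lambda>k. ereal (s k))"
    using limsup_subseq_lim by blast
  have "ereal a \<le> limsup (\<lambda>k. ereal (s k))"
    using \<sigma>(2) bounds(1) by (intro tendsto_lowerbound) (auto simp: comp_def)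
  moreover have "limsup (\<lambda>k. ereal (s k)) \<le> ereal b"
    using \<sigma>(2) bounds(2) by (intro tendsto_upperbound) (auto simp: comp_def)
  ultimately obtain A where A: "limsup (\<lambda>k. ereal (s k)) = ereal A"
    by (cases "limsup (\<lambda>k. ereal (s k))") auto
  have conv: "(\<lambda>t. s (\<sigma> t)) \<longlonglongrightarrow> A" using \<sigma>(2) unfolding A comp_def lim_ereal .
  have eventually: "eventually (\<lambda>k. s k < A + e) sequentially" if "0 < e" for e
  proof -
    have "Limsup sequentially (\<lambda>k. ereal (s k)) < ereal (A + e)" using that A by simp
    from Limsup_lessD[OF this] show ?thesis by simp
  qed
  have upper: "y \<le> A" if \<tau>: "strict_mono \<tau>" "(\<lambda>t. s (\<tau> t)) \<longlonglongrightarrow> y" for \<tau> y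
  proof (rule field_le_epsilon)
    fix e :: real assume "0 < e"
    then have "eventually (\<lambda>t. s (\<tau> t) < A + e) sequentially"
      using eventually_compose_filterlim[OF eventually filterlim_subseq[OF \<tau>(1)]] by blast
    then show "y \<le> A + e" using \<tau>(2) by (intro tendsto_upperbound) (auto elim: eventually_mono)
  qed
  show ?thesis using that[OF \<sigma>(1) conv eventually upper] .
qed

lemma subseq_constant_mod:
  fixes g :: "nat \<Rightarrow> nat"
  assumes N: "0 < N"
  obtains t and \<rho> :: "nat \<Rightarrow> nat" where "t < N" "strict_mono \<rho>" "\<And>m. g (\<rho> m) mod N = t"
proof -
  have "(UNIV :: nat set) = (\<Union>t<N. {m. g m mod N = t})" using N by auto
  then have "\<exists>t<N. infinite {m. g m mod N = t}"
    using infinite_UNIV_nat by (metis finite_UN_I finite_lessThan lessThan_iff)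
  then obtain t where t: "t < N" "infinite {m. g m mod N = t}" by auto
  show ?thesis
    using that[OF t(1) strict_mono_enumerate[OF t(2)]] enumerate_in_set[OF t(2)] by blast
qed

lemma subseq_aligned_window:
  fixes \<sigma> :: "nat \<Rightarrow> nat"
  assumes \<sigma>: "strict_mono \<sigma>" and N: "0 < N"
  obtains \<rho> K :: "nat \<Rightarrow> nat" and P where "strict_mono \<rho>" "strict_mono K" "W \<le> P"
    "\<And>t. K t mod N = 0" "\<And>t. K t + P = \<sigma> (\<rho> t)"
proof -
  define \<sigma>' where "\<sigma>' t = \<sigma> (t + (N * W + N))" for t
  obtain r and \<rho> :: "nat \<Rightarrow> nat" where r: "r < N" "strict_mono \<rho>" "\<And>t. \<sigma>' (\<rho> t) mod N = r"
    using subseq_constant_mod[OF N] by blast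
  define P where "P = N * W + r"
  define \<rho>' where "\<rho>' t = \<rho> t + (N * W + N)" for t
  have \<rho>': "strict_mono \<rho>'" using r(2) unfolding \<rho>'_def strict_mono_def by simp
  have P_le: "P \<le> \<sigma> (\<rho>' t)" for t
    using seq_suble[OF \<sigma>, of "\<rho>' t"] r(1) unfolding \<rho>'_def P_def by simp
  define K where "K t = \<sigma> (\<rho>' t) - P" for t
  have KP: "K t + P = \<sigma> (\<rho>' t)" for t unfolding K_def using P_le[of t] by simp
  have "strict_mono K"
    unfolding strict_mono_def
  proof (intro allI impI)
    fix a b :: nat assume "a < b"
    then have "\<sigma> (\<rho>' a) < \<sigma> (\<rho>' b)" using strict_monoD[OF \<sigma>] strict_monoD[OF \<rho>'] by blast
    then show "K a < K b" using KP[of a] KP[of b] by linarith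
  qed
  moreover have "K t mod N = 0" for t
  proof -
    have "\<sigma> (\<rho>' t) mod N = r" using r(3)[of t] unfolding \<sigma>'_def \<rho>'_def .
    then have "(K t + r + N * W) mod N = r mod N" using KP[of t] r(1) unfolding P_def
      by (simp add: ac_simps)
    then have "N dvd K t" using mod_eq_dvd_iff_nat[of r "K t + r" N] by simp
    then show ?thesis by simp
  qed
  moreover have "W \<le> P" using N unfolding P_def by (simp add: trans_le_add1)
  ultimately show ?thesis using that[OF \<rho>'] KP by blast
qed

locale jacobi_process =
  fixes n :: nat and os :: "(nat \<times> nat) list" and H F U :: "nat \<Rightarrow> cmat"
    and i j :: "nat \<Rightarrow> nat" and c B :: real
  assumes ordering: "set os \<subseteq> pairs n" "os \<noteq> []"
    and strategy: "(i k, j k) = cyclic_strategy os k"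
    and hermitian: "hermitian_mat n (H k)"
    and step: "mat_eq n (H (Suc k)) (congr_mat n (F k) (H k))"
    and F_in_plane: "in_plane n (i k) (j k) (F k)"
    and U_unitary: "unitary_mat n (U k)" "unitary_mat n (adj (U k))"
    and F_minus_U: "r \<in> {1..n} \<Longrightarrow> s \<in> {1..n} \<Longrightarrow> (\<lambda>k. F k r s - U k r s) \<longlonglongrightarrow> 0"
    and F_diag: "0 < c" "eventually (\<lambda>k. c \<le> cmod (F k (i k) (i k))) sequentially"
    and H_bounded: "r \<in> {1..n} \<Longrightarrow> s \<in> {1..n} \<Longrightarrow> cmod (H k r s) \<le> B"
begin

lemma pivot_in_pairs: "1 \<le> i k \<and> i k < j k \<and> j k \<le> n"
proof -
  have "cyclic_strategy os k \<in> set os"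
    using ordering(2) unfolding cyclic_strategy_def by simp
  then show ?thesis using ordering(1) strategy[of k] unfolding pairs_def by auto
qed

lemma pivot_shift:
  assumes "K mod length os = 0"
  shows "i (K + l) = i l" "j (K + l) = j l"
proof -
  have "cyclic_strategy os (K + l) = cyclic_strategy os l"
    using assms unfolding cyclic_strategy_def by (simp add: mod_add_left_eq[symmetric])
  then show "i (K + l) = i l" "j (K + l) = j l" using strategy by (metis prod.inject)+
qed

lemma F_bounded:
  assumes rs: "r \<in> {1..n}" "s \<in> {1..n}"
  shows "\<exists>b. \<forall>k. cmod (F k r s) \<le> b"
proof -
  have "Bseq (\<lambda>k. F k r s - U k r s)"
    using F_minus_U[OF rs] by (blast intro: convergent_imp_Bseq convergentI)
  then obtain b where b: "\<And>k. cmod (F k r s - U k r s) \<le> b" unfolding Bseq_def by blast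
  have "cmod (F k r s) \<le> b + 1" for k
    using norm_triangle_ineq[of "F k r s - U k r s" "U k r s"] b[of k]
      unitary_entry_bound[OF U_unitary(1) rs, of k] by simp
  then show ?thesis by blast
qed

lemma window_convergent_subseq:
  fixes K :: "nat \<Rightarrow> nat"
  assumes K: "strict_mono K"
  obtains \<rho> X G where "strict_mono \<rho>"
    "\<And>l. l \<le> P \<Longrightarrow> \<forall>r\<in>{1..n}. \<forall>s\<in>{1..n}. (\<lambda>t. H (K (\<rho> t) + l) r s) \<longlonglongrightarrow> X l r s"
    "\<And>l. l \<le> P \<Longrightarrow> \<forall>r\<in>{1..n}. \<forall>s\<in>{1..n}. (\<lambda>t. F (K (\<rho> t) + l) r s) \<longlonglongrightarrow> G l r s"
proof -
  define I where "I = {..P} \<times> {1..n} \<times> {1..n} \<times> (UNIV :: bool set)"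
  define f where "f = (\<lambda>(l, r, s, b) t. if b then H (K t + l) r s else F (K t + l) r s)"
  have bounded: "\<forall>x\<in>I. \<exists>b. \<forall>t. cmod (f x t) \<le> b"
  proof
    fix x assume "x \<in> I"
    then obtain l r s b where x: "x = (l, r, s, b)" "r \<in> {1..n}" "s \<in> {1..n}"
      unfolding I_def by auto
    obtain b' where "\<forall>k. cmod (F k r s) \<le> b'" using F_bounded[OF x(2,3)] by blast
    then have "\<forall>t. cmod (f x t) \<le> max B b'"
      using H_bounded[OF x(2,3)] unfolding x f_def by (simp add: le_max_iff_disj)
    then show "\<exists>b. \<forall>t. cmod (f x t) \<le> b" by blast
  qed
  have "finite I" unfolding I_def by simp
  then obtain \<rho> where \<rho>: "strict_mono \<rho>" "\<forall>x\<in>I. convergent (\<lambda>t. f x (\<rho> t))"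
    using bounded_family_convergent_subseq[OF \<open>finite I\<close> bounded] by blast
  have "convergent (\<lambda>t. H (K (\<rho> t) + l) r s) \<and> convergent (\<lambda>t. F (K (\<rho> t) + l) r s)"
    if "l \<le> P" "r \<in> {1..n}" "s \<in> {1..n}" for l r s
    using \<rho>(2)[rule_format, of "(l, r, s, True)"] \<rho>(2)[rule_format, of "(l, r, s, False)"] that
    unfolding I_def f_def by auto
  then show ?thesis
    using that[OF \<rho>(1), of "\<lambda>l r s. lim (\<lambda>t. H (K (\<rho> t) + l) r s)"
        "\<lambda>l r s. lim (\<lambda>t. F (K (\<rho> t) + l) r s)"]
    by (simp add: convergent_LIMSEQ_iff)
qed

lemma limit_plane_rotation:
  fixes K :: "nat \<Rightarrow> nat"
  assumes K: "strict_mono K" "\<And>t. K t mod length os = 0"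
    and lim: "\<forall>r\<in>{1..n}. \<forall>s\<in>{1..n}. (\<lambda>t. F (K t + l) r s) \<longlonglongrightarrow> G r s"
  shows "plane_rotation n (i l) (j l) G"
proof -
  have Kl: "strict_mono (\<lambda>t. K t + l)" using strict_mono_o[OF strict_mono_add K(1)]
    by (simp add: comp_def)
  have range: "i l \<in> {1..n}" "j l \<in> {1..n}" "i l \<noteq> j l" using pivot_in_pairs[of l] by auto
  have U_lim: "\<forall>r\<in>{1..n}. \<forall>s\<in>{1..n}. (\<lambda>t. U (K t + l) r s) \<longlonglongrightarrow> G r s"
  proof (intro ballI)
    fix r s assume rs: "r \<in> {1..n}" "s \<in> {1..n}"
    have "(\<lambda>t. F (K t + l) r s - U (K t + l) r s) \<longlonglongrightarrow> 0"
      using LIMSEQ_subseq_LIMSEQ[OF F_minus_U[OF rs] Kl] by (simp add: comp_def)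
    from tendsto_diff[OF lim[rule_format, OF rs] this] show "(\<lambda>t. U (K t + l) r s) \<longlonglongrightarrow> G r s" by simp
  qed
  have "\<forall>r\<in>{1..n}. \<forall>s\<in>{1..n}. (\<lambda>t. adj (U (K t + l)) r s) \<longlonglongrightarrow> adj G r s"
    using U_lim unfolding adj_def by (auto intro: tendsto_cnj)
  then have unitary: "unitary_mat n G" "unitary_mat n (adj G)"
    using unitary_mat_limit[of n "\<lambda>t. U (K t + l)" G] U_lim
      unitary_mat_limit[of n "\<lambda>t. adj (U (K t + l))" "adj G"] U_unitary by auto
  have plane: "in_plane n (i l) (j l) G"
    unfolding in_plane_def
  proof (intro ballI impI)
    fix r s assume rs: "r \<in> {1..n}" "s \<in> {1..n}" and out: "r \<notin> {i l, j l} \<or> s \<notin> {i l, j l}"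
    have "(\<lambda>t. F (K t + l) r s) = (\<lambda>t. idm r s)"
      using F_in_plane rs out pivot_shift[OF K(2)] unfolding in_plane_def by auto
    then show "G r s = idm r s" using lim rs by (metis LIMSEQ_const_iff)
  qed
  have "eventually (\<lambda>t. c \<le> cmod (F (K t + l) (i l) (i l))) sequentially"
    using eventually_compose_filterlim[OF F_diag(2) filterlim_subseq[OF Kl]]
    by (simp add: pivot_shift[OF K(2)])
  moreover have "(\<lambda>t. cmod (F (K t + l) (i l) (i l))) \<longlonglongrightarrow> cmod (G (i l) (i l))"
    using lim range by (intro tendsto_norm) auto
  ultimately have "c \<le> cmod (G (i l) (i l))" by (intro tendsto_lowerbound) auto
  then have "G (i l) (i l) \<noteq> 0" using F_diag(1) by auto
  moreover have "G (j l) (j l) \<noteq> 0"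
    using unitary_in_plane_diag_nonzero[OF unitary plane range] calculation .
  ultimately show ?thesis
    unfolding plane_rotation_def using pivot_in_pairs[of l] unitary plane by auto
qed

lemma limit_step:
  fixes K :: "nat \<Rightarrow> nat"
  assumes H_lim: "\<And>l. l \<le> P \<Longrightarrow> \<forall>r\<in>{1..n}. \<forall>s\<in>{1..n}. (\<lambda>t. H (K t + l) r s) \<longlonglongrightarrow> X l r s"
    and F_lim: "\<forall>r\<in>{1..n}. \<forall>s\<in>{1..n}. (\<lambda>t. F (K t + l) r s) \<longlonglongrightarrow> G r s"
    and l: "l < P"
  shows "mat_eq n (X (Suc l)) (congr_mat n G (X l))"
  unfolding mat_eq_def
proof (intro ballI)
  fix r s assume rs: "r \<in> {1..n}" "s \<in> {1..n}"
  have eq: "H (K t + Suc l) r s = congr_mat n (F (K t + l)) (H (K t + l)) r s" for t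
    using step[of "K t + l"] rs unfolding mat_eq_def by simp
  have "(\<lambda>t. H (K t + Suc l) r s) \<longlonglongrightarrow> X (Suc l) r s"
    using H_lim[of "Suc l"] l rs by simp
  moreover have "(\<lambda>t. H (K t + Suc l) r s) \<longlonglongrightarrow> congr_mat n G (X l) r s"
    unfolding eq using F_lim H_lim[of l] l rs by (intro tendsto_congr_mat) auto
  ultimately show "X (Suc l) r s = congr_mat n G (X l) r s" by (rule LIMSEQ_unique)
qed

lemma limit_hermitian:
  fixes K :: "nat \<Rightarrow> nat"
  assumes lim: "\<forall>r\<in>{1..n}. \<forall>s\<in>{1..n}. (\<lambda>t. H (K t) r s) \<longlonglongrightarrow> X r s"
  shows "hermitian_mat n X"
  unfolding hermitian_mat_def
proof (intro ballI)
  fix r s assume rs: "r \<in> {1..n}" "s \<in> {1..n}"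
  have eq: "H (K t) r s = cnj (H (K t) s r)" for t
    using hermitian[of "K t"] rs unfolding hermitian_mat_def by blast
  have "(\<lambda>t. H (K t) r s) \<longlonglongrightarrow> X r s" using lim rs by simp
  moreover have "(\<lambda>t. H (K t) r s) \<longlonglongrightarrow> cnj (X s r)"
    unfolding eq using lim rs by (intro tendsto_cnj) auto
  ultimately show "X r s = cnj (X s r)" by (rule LIMSEQ_unique)
qed

lemma limit_pivot_annihilated:
  fixes K :: "nat \<Rightarrow> nat"
  assumes pivots: "(\<lambda>k. cmod (H (Suc k) (i k) (j k))) \<longlonglongrightarrow> 0"
    and K: "strict_mono K" "\<And>t. K t mod length os = 0"
    and lim: "\<forall>r\<in>{1..n}. \<forall>s\<in>{1..n}. (\<lambda>t. H (K t + Suc l) r s) \<longlonglongrightarrow> Y r s"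
  shows "Y (i l) (j l) = 0"
proof -
  have Kl: "strict_mono (\<lambda>t. K t + l)" using strict_mono_o[OF strict_mono_add K(1)]
    by (simp add: comp_def)
  have "(\<lambda>t. cmod (H (K t + Suc l) (i l) (j l))) \<longlonglongrightarrow> 0"
    using LIMSEQ_subseq_LIMSEQ[OF pivots Kl] by (simp add: comp_def pivot_shift[OF K(2)])
  then have "(\<lambda>t. H (K t + Suc l) (i l) (j l)) \<longlonglongrightarrow> 0" by (simp add: tendsto_norm_zero_iff)
  with lim pivot_in_pairs[of l] show ?thesis using LIMSEQ_unique by force
qed

lemma off_sq_bounded: "off_sq n (H k) \<le> real (n * n) * B\<^sup>2"
proof -
  have "off_sq n (H k) \<le> (\<Sum>r\<in>{1..n}. \<Sum>s\<in>{1..n}. B\<^sup>2)"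
    unfolding off_sq_def
    by (intro sum_mono) (auto intro!: power_mono H_bounded)
  then show ?thesis by simp
qed

text \<open>The heart of the argument: the windows of \<open>P\<close> steps ending along \<open>\<sigma>\<close> converge to an exact
  process, along which \<open>S\<^sup>2\<close> cannot increase; it starts at most at \<open>A\<close> and ends at \<open>A\<close>, so no pivot
  is nonzero, and a full number of sweeps forces the start of the window to be diagonal.\<close>
lemma limsup_off_sq_zero:
  assumes pivots: "(\<lambda>k. cmod (H (Suc k) (i k) (j k))) \<longlonglongrightarrow> 0"
    and forcing: "zero_forcing n (sweeps m os)"
    and \<sigma>: "strict_mono \<sigma>" "(\<lambda>t. off_sq n (H (\<sigma> t))) \<longlonglongrightarrow> A"
    and upper: "\<And>\<tau> y. strict_mono \<tau> \<Longrightarrow> (\<lambda>t. off_sq n (H (\<tau> t))) \<longlonglongrightarrow> y \<Longrightarrow> y \<le> A"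
  shows "A = 0"
proof -
  have N: "0 < length os" using ordering(2) by simp
  obtain \<rho> K :: "nat \<Rightarrow> nat" and P where \<rho>: "strict_mono \<rho>" and K: "strict_mono K"
    and P: "m * length os \<le> P" and K_mod: "\<And>t. K t mod length os = 0"
    and KP: "\<And>t. K t + P = \<sigma> (\<rho> t)"
    using subseq_aligned_window[where W = "m * length os", OF \<sigma>(1) N] by blast
  obtain \<rho>' :: "nat \<Rightarrow> nat" and X G where \<rho>': "strict_mono \<rho>'"
    and H_lim: "\<And>l. l \<le> P \<Longrightarrow> \<forall>r\<in>{1..n}. \<forall>s\<in>{1..n}. (\<lambda>t. H (K (\<rho>' t) + l) r s) \<longlonglongrightarrow> X l r s"
    and F_lim: "\<And>l. l \<le> P \<Longrightarrow> \<forall>r\<in>{1..n}. \<forall>s\<in>{1..n}. (\<lambda>t. F (K (\<rho>' t) + l) r s) \<longlonglongrightarrow> G l r s"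
    using window_convergent_subseq[where P = P, OF K] by blast
  have K': "strict_mono (K \<circ> \<rho>')" "\<And>t. (K \<circ> \<rho>') t mod length os = 0"
    using strict_mono_o[OF K \<rho>'] K_mod by simp_all
  have rotation: "plane_rotation n (i l) (j l) (G l)" if "l < P" for l
    using limit_plane_rotation[OF K'] F_lim that by (simp add: comp_def)
  have step_X: "mat_eq n (X (Suc l)) (congr_mat n (G l) (X l))" if "l < P" for l
    using limit_step[OF H_lim F_lim] that by simp
  have hermitian_X: "hermitian_mat n (X l)" if "l \<le> P" for l
    using limit_hermitian[OF H_lim[OF that]] .
  have annihilated: "X (Suc l) (i l) (j l) = 0" if "l < P" for l
    using limit_pivot_annihilated[OF pivots K'] H_lim[of "Suc l"] that by (simp add: comp_def)
  have "(\<lambda>t. off_sq n (H (K (\<rho>' t) + P))) \<longlonglongrightarrow> off_sq n (X P)"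
    using H_lim[of P] by (intro tendsto_off_sq) auto
  moreover have "(\<lambda>t. off_sq n (H (K (\<rho>' t) + P))) \<longlonglongrightarrow> A"
    using LIMSEQ_subseq_LIMSEQ[OF \<sigma>(2) strict_mono_o[OF \<rho> \<rho>']] by (simp add: KP comp_def)
  ultimately have end_eq: "off_sq n (X P) = A" using LIMSEQ_unique by blast
  have start_le: "off_sq n (X 0) \<le> A"
    using upper[OF K'(1)] tendsto_off_sq[OF H_lim[of 0]] by (simp add: comp_def)
  have balance: "off_sq n (X P) + 2 * (\<Sum>l<P. (cmod (X l (i l) (j l)))\<^sup>2) = off_sq n (X 0)"
    by (rule off_sq_rotation_process[where p = i and q = j and G = G and X = X])
      (simp_all add: rotation step_X hermitian_X annihilated)
  moreover have pivot_sum: "0 \<le> (\<Sum>l<P. (cmod (X l (i l) (j l)))\<^sup>2)" by (rule sum_nonneg) simp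
  ultimately have "(\<Sum>l<P. (cmod (X l (i l) (j l)))\<^sup>2) = 0" using end_eq start_le by linarith
  then have pivot: "X l (i l) (j l) = 0" if "l < P" for l
    using that sum_nonneg_eq_0_iff[of "{..<P}" "\<lambda>l. (cmod (X l (i l) (j l)))\<^sup>2"] by simp
  have "sweeps m os = map (\<lambda>l. (i l, j l)) [0..<m * length os]"
    unfolding sweeps_eq_map_cyclic_strategy strategy ..
  moreover have "[0..<P] = [0..<m * length os] @ [m * length os..<P]"
    using upt_add_eq_append[of 0 "m * length os" "P - m * length os"] P by simp
  ultimately have window_forcing: "zero_forcing n (map (\<lambda>l. (i l, j l)) [0..<P])"
    using zero_forcing_append_right[OF forcing] by simp
  have "off_sq n (X 0) = 0"
    by (rule off_sq_zero_rotation_process[where p = i and q = j and G = G and X = X and P = P])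
      (simp_all add: rotation step_X hermitian_X pivot annihilated window_forcing)
  then show ?thesis using balance end_eq pivot_sum off_sq_nonneg[of n "X P"] by linarith
qed

theorem off_sq_tendsto_zero:
  assumes pivots: "(\<lambda>k. cmod (H (Suc k) (i k) (j k))) \<longlonglongrightarrow> 0"
    and forcing: "zero_forcing n (sweeps m os)"
  shows "(\<lambda>k. off_sq n (H k)) \<longlonglongrightarrow> 0"
proof -
  obtain A \<sigma> where \<sigma>: "strict_mono \<sigma>" "(\<lambda>t. off_sq n (H (\<sigma> t))) \<longlonglongrightarrow> A"
    and eventually: "\<And>e. 0 < e \<Longrightarrow> eventually (\<lambda>k. off_sq n (H k) < A + e) sequentially"
    and upper: "\<And>\<tau> y. strict_mono \<tau> \<Longrightarrow> (\<lambda>t. off_sq n (H (\<tau> t))) \<longlonglongrightarrow> y \<Longrightarrow> y \<le> A"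
    using limsup_subseq_witness[of 0 "\<lambda>k. off_sq n (H k)"] off_sq_nonneg off_sq_bounded by metis
  have "A = 0" by (rule limsup_off_sq_zero[OF pivots forcing \<sigma> upper])
  show ?thesis
  proof (rule order_tendstoI)
    fix a :: real assume "a < 0"
    then show "eventually (\<lambda>k. a < off_sq n (H k)) sequentially"
      by (intro always_eventually allI) (rule less_le_trans[OF _ off_sq_nonneg])
  next
    fix a :: real assume "0 < a"
    then show "eventually (\<lambda>k. off_sq n (H k) < a) sequentially"
      using eventually \<open>A = 0\<close> by simp
  qed
qed

end

lemma hermitian_mat_eq: assumes "mat_eq n X Y" "hermitian_mat n Y" shows "hermitian_mat n X"
  using assms unfolding hermitian_mat_def mat_eq_def by metis

lemma hermitian_congr_process:
  assumes "hermitian_mat n (H 0)" "\<And>k. mat_eq n (H (Suc k)) (congr_mat n (F k) (H k))"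
  shows "hermitian_mat n (H k)"
proof (induction k)
  case 0 show ?case by (rule assms(1))
next
  case (Suc k) show ?case by (rule hermitian_mat_eq[OF assms(2) hermitian_congr_mat[OF Suc.IH]])
qed

lemma liminf_pos_eventually_ge:
  fixes f :: "nat \<Rightarrow> real"
  assumes "liminf (\<lambda>k. ereal (f k)) > 0"
  obtains c where "0 < c" "eventually (\<lambda>k. c \<le> f k) sequentially"
proof -
  obtain c where c: "0 < ereal c" "ereal c < liminf (\<lambda>k. ereal (f k))"
    using ereal_dense2[OF assms] by blast
  have "eventually (\<lambda>k. c \<le> f k) sequentially"
    using less_LiminfD[OF c(2)] by (rule eventually_mono) simp
  then show ?thesis using that c(1) by simp
qed

lemma cmod_le_off_norm:
  assumes rs: "r \<in> {1..n}" "s \<in> {1..n}" "r \<noteq> s"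
  shows "cmod (X r s) \<le> off_norm n X"
proof -
  have "(cmod (X r s))\<^sup>2 = (if r = s then 0 else (cmod (X r s))\<^sup>2)" using rs by simp
  also have "\<dots> \<le> (\<Sum>s'\<in>{1..n}. if r = s' then 0 else (cmod (X r s'))\<^sup>2)"
    by (rule member_le_sum[OF rs(2)]) auto
  also have "\<dots> \<le> off_sq n X" unfolding off_sq_def
    by (rule member_le_sum[OF rs(1)]) (auto intro!: sum_nonneg)
  finally show ?thesis unfolding off_norm_eq_sqrt_off_sq by (rule real_le_rsqrt)
qed

lemma off_diag_entry_tendsto_zero:
  assumes pivot: "\<And>k. i k \<in> {1..n} \<and> j k \<in> {1..n} \<and> i k \<noteq> j k"
    and off: "(\<lambda>k. off_norm n (H k)) \<longlonglongrightarrow> 0"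
  shows "(\<lambda>k. cmod (H (Suc k) (i k) (j k))) \<longlonglongrightarrow> 0"
proof -
  have "eventually (\<lambda>k. norm (cmod (H (Suc k) (i k) (j k))) \<le> off_norm n (H (Suc k))) sequentially"
    using pivot by (intro always_eventually allI) (simp add: cmod_le_off_norm)
  from Lim_null_comparison[OF this LIMSEQ_Suc[OF off]] show ?thesis .
qed

theorem theorem3p8:
  fixes n :: nat and H :: "nat \<Rightarrow> cmat" and F :: "nat \<Rightarrow> cmat"
    and i j :: "nat \<Rightarrow> nat"
  assumes n2: "n \<ge> 2"
    and herm: "hermitian_mat n (H 0)"
    and nonzero: "\<not> zero_mat n (H 0)"
    and step: "\<And>k. \<forall>r\<in>{1..n}. \<forall>s\<in>{1..n}.
                  H (Suc k) r s = mmult n (mmult n (adj (F k)) (H k)) (F k) r s"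
    and plane: "\<And>k. elem_plane n (i k) (j k) (F k)"
    and A1: "\<exists>os\<in>gen_serial n. \<forall>k. (i k, j k) = cyclic_strategy os k"
    and A2: "\<exists>U. (\<forall>k. unitary_mat n (U k) \<and> elem_plane_any n (U k)) \<and>
               (\<forall>r\<in>{1..n}. \<forall>s\<in>{1..n}. (\<lambda>k. F k r s - U k r s) \<longlonglongrightarrow> 0)"
    and A3: "liminf (\<lambda>k. ereal (cmod (F k (i k) (i k)))) > 0"
    and A4: "\<exists>B. \<forall>k. \<forall>r\<in>{1..n}. \<forall>s\<in>{1..n}. cmod (H k r s) \<le> B"
  shows "((\<lambda>k. cmod (H (Suc k) (i k) (j k))) \<longlonglongrightarrow> 0) \<longleftrightarrow>
         ((\<lambda>k. off_norm n (H k)) \<longlonglongrightarrow> 0)"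
proof
  obtain os where os: "os \<in> gen_serial n" "\<And>k. (i k, j k) = cyclic_strategy os k" using A1 by blast
  obtain U where U: "\<And>k. unitary_mat n (U k)" "\<And>k. elem_plane_any n (U k)"
    "\<forall>r\<in>{1..n}. \<forall>s\<in>{1..n}. (\<lambda>k. F k r s - U k r s) \<longlonglongrightarrow> 0" using A2 by blast
  obtain c where c: "0 < c" "eventually (\<lambda>k. c \<le> cmod (F k (i k) (i k))) sequentially"
    using liminf_pos_eventually_ge[OF A3] .
  obtain B where B: "\<forall>k. \<forall>r\<in>{1..n}. \<forall>s\<in>{1..n}. cmod (H k r s) \<le> B" using A4 by blast
  have "is_ordering n os" using os(1) unfolding gen_serial_def by blast
  then have ordering: "set os = pairs n" unfolding is_ordering_def by blast
  have "(1, 2) \<in> pairs n" using n2 unfolding pairs_def by simp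
  then have "os \<noteq> []" using ordering by auto
  have step': "\<And>k. mat_eq n (H (Suc k)) (congr_mat n (F k) (H k))"
    using step unfolding mat_eq_def congr_mat_def by blast
  have "\<And>k. in_plane n (i k) (j k) (F k)" using plane unfolding elem_plane_def in_plane_def by blast
  moreover have "\<And>k. unitary_mat n (adj (U k))"
    using U(1,2) unitary_adj_if_nonsingular unfolding elem_plane_any_def elem_plane_def by blast
  ultimately interpret jacobi_process n os H F U i j c B
    using \<open>os \<noteq> []\<close> os(2) hermitian_congr_process[OF herm step'] step' U(1,3) c B
    by unfold_locales (simp_all add: ordering)
  obtain m where "zero_forcing n (sweeps m os)"
    using sweeps_zero_forcing_gen_serial[OF _ os(1)] n2 unfolding sweeps_zero_forcing_def by auto
  moreover assume "(\<lambda>k. cmod (H (Suc k) (i k) (j k))) \<longlonglongrightarrow> 0"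
  ultimately have "(\<lambda>k. sqrt (off_sq n (H k))) \<longlonglongrightarrow> sqrt 0"
    by (intro tendsto_real_sqrt off_sq_tendsto_zero)
  then show "(\<lambda>k. off_norm n (H k)) \<longlonglongrightarrow> 0" unfolding off_norm_eq_sqrt_off_sq by simp
next
  assume off: "(\<lambda>k. off_norm n (H k)) \<longlonglongrightarrow> 0"
  have "i k \<in> {1..n} \<and> j k \<in> {1..n} \<and> i k \<noteq> j k" for k
    using plane[of k] unfolding elem_plane_def by auto
  then show "(\<lambda>k. cmod (H (Suc k) (i k) (j k))) \<longlonglongrightarrow> 0"
    by (rule off_diag_entry_tendsto_zero[OF _ off])
qed

end
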